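(* Let $A\subseteq B$ be an extension of commutative rings, and regard $B$ as a subring of $B\otimes_A B$ via $b\mapsto b\otimes 1$. Then $\mathfrak{C}(A,B)=\mathfrak{C}(A,B\otimes_AB)$; that is, the canonical map $\mathfrak{C}(A,B)\to\mathfrak{C}(A,B\otimes_AB)$ induced by the inclusion of groups of invertible ideals is an isomorphism.
   Context: For an extension of rings $R\subseteq S$ and $R$-submodules $L,L'$ of $S$, $LL'$ is the $R$-submodule of finite sums $\sum x_ky_k$. An $R$-submodule $L$ of $S$ is an invertible ideal of $R\subseteq S$ if $LL'=R$ for some $R$-submodule $L'$ of $S$; these form an abelian group $\mathscr{G}(R,S)$ and $\mathfrak{C}(R,S)=\mathscr{G}(R,S)/\{Rx: x\in S^\ast\}$. *)

theory Defs
  imports "HOL-Algebra.Algebra"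
begin

text \<open>A ring extension R \<subseteq> S is given by a ring S (HOL-Algebra record) and a subset
  R of its carrier (a subring).\<close>

definition rsubmod :: "('s,'n) ring_scheme \<Rightarrow> 's set \<Rightarrow> 's set \<Rightarrow> bool" where
  "rsubmod S R L \<longleftrightarrow> L \<subseteq> carrier S \<and> \<zero>\<^bsub>S\<^esub> \<in> L
     \<and> (\<forall>x\<in>L. \<forall>y\<in>L. x \<oplus>\<^bsub>S\<^esub> y \<in> L) \<and> (\<forall>x\<in>L. \<ominus>\<^bsub>S\<^esub> x \<in> L)
     \<and> (\<forall>r\<in>R. \<forall>x\<in>L. r \<otimes>\<^bsub>S\<^esub> x \<in> L)"

inductive_set smod_prod :: "('s,'n) ring_scheme \<Rightarrow> 's set \<Rightarrow> 's set \<Rightarrow> 's set"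
  for S L L' where
  zero: "\<zero>\<^bsub>S\<^esub> \<in> smod_prod S L L'"
| step: "x \<in> L \<Longrightarrow> y \<in> L' \<Longrightarrow> z \<in> smod_prod S L L' \<Longrightarrow> (x \<otimes>\<^bsub>S\<^esub> y) \<oplus>\<^bsub>S\<^esub> z \<in> smod_prod S L L'"

definition inv_ideal :: "('s,'n) ring_scheme \<Rightarrow> 's set \<Rightarrow> 's set \<Rightarrow> bool" where
  "inv_ideal S R L \<longleftrightarrow> rsubmod S R L \<and> (\<exists>L'. rsubmod S R L' \<and> smod_prod S L L' = R)"

definition Ginv :: "('s,'n) ring_scheme \<Rightarrow> 's set \<Rightarrow> 's set set" where
  "Ginv S R = {L. inv_ideal S R L}"

definition scale :: "('s,'n) ring_scheme \<Rightarrow> 's set \<Rightarrow> 's \<Rightarrow> 's set" where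
  "scale S L u = (\<lambda>l. l \<otimes>\<^bsub>S\<^esub> u) ` L"

text \<open>Class of L modulo the principal invertible ideals Rx, x a unit of S
  (note L(Rx) = Lx).\<close>
definition Ccls :: "('s,'n) ring_scheme \<Rightarrow> 's set \<Rightarrow> 's set \<Rightarrow> 's set set" where
  "Ccls S R L = {M \<in> Ginv S R. \<exists>u\<in>Units S. M = scale S L u}"

definition Cgrp :: "('s,'n) ring_scheme \<Rightarrow> 's set \<Rightarrow> 's set set monoid" where
  "Cgrp S R = \<lparr>carrier = Ccls S R ` Ginv S R,
      monoid.mult = (\<lambda>xx yy. {N. \<exists>L\<in>xx. \<exists>M\<in>yy. N = smod_prod S L M}),
      one = Ccls S R R\<rparr>"

definition Cmap :: "('s,'n) ring_scheme \<Rightarrow> ('t,'k) ring_scheme \<Rightarrow> ('s \<Rightarrow> 't) \<Rightarrow> 's set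
    \<Rightarrow> 's set set \<Rightarrow> 't set set" where
  "Cmap S T \<phi> R xx = {N \<in> Ginv T (\<phi> ` R). \<exists>L\<in>xx. \<exists>u\<in>Units T. N = scale T (\<phi> ` L) u}"

text \<open>Formal Z-linear combinations of pairs (x,y) in B \<times> B (finitely supported),
  modulo the subgroup generated by bilinearity and A-balancedness relations.
  Multiplication is induced by (x\<otimes>y)(x'\<otimes>y') = xx'\<otimes>yy'.\<close>

definition delta :: "'b \<Rightarrow> 'b \<Rightarrow> ('b \<times> 'b \<Rightarrow> int)" where
  "delta x y = (\<lambda>p. if p = (x, y) then 1 else 0)"

definition fsums :: "('b,'m) ring_scheme \<Rightarrow> ('b \<times> 'b \<Rightarrow> int) set" where
  "fsums B = {f. finite {p. f p \<noteq> 0} \<and> {p. f p \<noteq> 0} \<subseteq> carrier B \<times> carrier B}"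

inductive_set tens_rels :: "('b,'m) ring_scheme \<Rightarrow> 'b set \<Rightarrow> ('b \<times> 'b \<Rightarrow> int) set"
  for B A where
  zero: "(\<lambda>_. 0) \<in> tens_rels B A"
| addl: "x \<in> carrier B \<Longrightarrow> x' \<in> carrier B \<Longrightarrow> y \<in> carrier B \<Longrightarrow>
     (\<lambda>p. delta (x \<oplus>\<^bsub>B\<^esub> x') y p - delta x y p - delta x' y p) \<in> tens_rels B A"
| addr: "x \<in> carrier B \<Longrightarrow> y \<in> carrier B \<Longrightarrow> y' \<in> carrier B \<Longrightarrow>
     (\<lambda>p. delta x (y \<oplus>\<^bsub>B\<^esub> y') p - delta x y p - delta x y' p) \<in> tens_rels B A"
| bal: "a \<in> A \<Longrightarrow> x \<in> carrier B \<Longrightarrow> y \<in> carrier B \<Longrightarrow>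
     (\<lambda>p. delta (a \<otimes>\<^bsub>B\<^esub> x) y p - delta x (a \<otimes>\<^bsub>B\<^esub> y) p) \<in> tens_rels B A"
| diff: "f \<in> tens_rels B A \<Longrightarrow> g \<in> tens_rels B A \<Longrightarrow> (\<lambda>p. f p - g p) \<in> tens_rels B A"

definition tens_class :: "('b,'m) ring_scheme \<Rightarrow> 'b set \<Rightarrow> ('b \<times> 'b \<Rightarrow> int)
    \<Rightarrow> ('b \<times> 'b \<Rightarrow> int) set" where
  "tens_class B A f = {g \<in> fsums B. (\<lambda>p. f p - g p) \<in> tens_rels B A}"

definition conv :: "('b,'m) ring_scheme \<Rightarrow> ('b \<times> 'b \<Rightarrow> int) \<Rightarrow> ('b \<times> 'b \<Rightarrow> int)
    \<Rightarrow> ('b \<times> 'b \<Rightarrow> int)" where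
  "conv B f g = (\<lambda>p. \<Sum>(q, r) \<in> {q. f q \<noteq> 0} \<times> {r. g r \<noteq> 0}.
      if (fst q \<otimes>\<^bsub>B\<^esub> fst r, snd q \<otimes>\<^bsub>B\<^esub> snd r) = p then f q * g r else 0)"

definition tensor :: "('b,'m) ring_scheme \<Rightarrow> 'b set \<Rightarrow> ('b \<times> 'b \<Rightarrow> int) set ring" where
  "tensor B A = \<lparr>carrier = tens_class B A ` fsums B,
      monoid.mult = (\<lambda>xx yy. {h \<in> fsums B. \<exists>f\<in>xx. \<exists>g\<in>yy. (\<lambda>p. h p - conv B f g p) \<in> tens_rels B A}),
      one = tens_class B A (delta \<one>\<^bsub>B\<^esub> \<one>\<^bsub>B\<^esub>),
      ring.zero = tens_class B A (\<lambda>_. 0),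
      ring.add = (\<lambda>xx yy. {h. \<exists>f\<in>xx. \<exists>g\<in>yy. h = (\<lambda>p. f p + g p)})\<rparr>"

definition tens_incl :: "('b,'m) ring_scheme \<Rightarrow> 'b set \<Rightarrow> 'b \<Rightarrow> ('b \<times> 'b \<Rightarrow> int) set" where
  "tens_incl B A b = tens_class B A (delta b \<one>\<^bsub>B\<^esub>)"

end

theory Submission
  imports Defs
begin

text \<open>The inclusion \<open>\<phi> : B \<rightarrow> B \<otimes>\<^sub>A B\<close>, \<open>b \<mapsto> b \<otimes> 1\<close>, has the ring retraction
  \<open>\<mu> (x \<otimes> y) = x y\<close>, and every retraction \<open>\<mu>\<close> of a ring map \<open>\<phi>\<close> makes the induced map of
  class groups bijective. It is injective because \<open>\<mu>\<close> recovers \<open>L\<close> from \<open>\<phi> L\<close>. It is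
  surjective because an invertible ideal \<open>N\<close> with \<open>N N' = \<phi> A\<close> is a unit multiple of
  \<open>\<phi> (\<mu> N)\<close>: writing \<open>1 = \<Sum> a\<^sub>i b\<^sub>i\<close> with \<open>a\<^sub>i \<in> N\<close>, \<open>b\<^sub>i \<in> N'\<close>, the element
  \<open>w = \<Sum> a\<^sub>i \<phi> (\<mu> b\<^sub>i)\<close> satisfies \<open>\<phi> (\<mu> n) w = n\<close> for \<open>n \<in> N\<close>, since each \<open>n b\<^sub>i \<in> \<phi> A\<close>
  is fixed by \<open>\<phi> \<circ> \<mu>\<close>. Then every element of \<open>N N'\<close>, in particular \<open>1\<close>, is a multiple
  of \<open>w\<close>, so \<open>w\<close> is a unit.\<close>

section \<open>Products of submodules and invertible ideals\<close>

lemma scaleI: "x \<in> L \<Longrightarrow> x \<otimes>\<^bsub>S\<^esub> u \<in> scale S L u"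
  unfolding scale_def by blast

context cring
begin

lemma smod_prod_subsetI:
  assumes "\<zero> \<in> P" "\<And>a b. a \<in> P \<Longrightarrow> b \<in> P \<Longrightarrow> a \<oplus> b \<in> P"
    "\<And>x y. x \<in> L \<Longrightarrow> y \<in> M \<Longrightarrow> x \<otimes> y \<in> P"
  shows "smod_prod R L M \<subseteq> P"
proof
  fix z assume "z \<in> smod_prod R L M" then show "z \<in> P"
    by (induction rule: smod_prod.induct) (use assms in auto)
qed

lemma smod_prod_subset_carrier:
  assumes "L \<subseteq> carrier R" "M \<subseteq> carrier R"
  shows "smod_prod R L M \<subseteq> carrier R"
  by (rule smod_prod_subsetI) (use assms in auto)

lemma smod_prod_add_closed:
  assumes "L \<subseteq> carrier R" "M \<subseteq> carrier R"
    and "x \<in> smod_prod R L M" "y \<in> smod_prod R L M"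
  shows "x \<oplus> y \<in> smod_prod R L M"
  using assms(3)
proof (induction rule: smod_prod.induct)
  case zero
  have "y \<in> carrier R" using smod_prod_subset_carrier[OF assms(1,2)] assms(4) by auto
  then show ?case using assms(4) by simp
next
  case (step a b z)
  have "(a \<otimes> b \<oplus> z) \<oplus> y = a \<otimes> b \<oplus> (z \<oplus> y)"
    using step assms smod_prod_subset_carrier by (meson a_assoc m_closed subsetD)
  then show ?case using step by (simp add: smod_prod.step)
qed

lemma smod_prod_mult_mem:
  assumes "L \<subseteq> carrier R" "M \<subseteq> carrier R" "x \<in> L" "y \<in> M"
  shows "x \<otimes> y \<in> smod_prod R L M"
proof -
  have "x \<otimes> y \<oplus> \<zero> \<in> smod_prod R L M" by (rule smod_prod.step) (use assms smod_prod.zero in auto)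
  moreover have "x \<otimes> y \<in> carrier R" using assms by (meson m_closed subsetD)
  ultimately show ?thesis by simp
qed

lemma smod_prod_comm_subset:
  assumes "L \<subseteq> carrier R" "M \<subseteq> carrier R"
  shows "smod_prod R L M \<subseteq> smod_prod R M L"
proof (rule smod_prod_subsetI)
  show "x \<otimes> y \<in> smod_prod R M L" if "x \<in> L" "y \<in> M" for x y
  proof -
    have "x \<otimes> y = y \<otimes> x" using that assms by (meson m_comm subsetD)
    then show ?thesis using smod_prod_mult_mem[OF assms(2,1)] that by simp
  qed
qed (use assms in \<open>auto intro: smod_prod.zero smod_prod_add_closed\<close>)

lemma smod_prod_comm:
  assumes "L \<subseteq> carrier R" "M \<subseteq> carrier R"
  shows "smod_prod R L M = smod_prod R M L"
  using smod_prod_comm_subset assms by blast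

lemma smod_prod_assoc_subset:
  assumes "L \<subseteq> carrier R" "M \<subseteq> carrier R" "N \<subseteq> carrier R"
  shows "smod_prod R (smod_prod R L M) N \<subseteq> smod_prod R L (smod_prod R M N)"
proof (rule smod_prod_subsetI)
  have c1: "smod_prod R M N \<subseteq> carrier R" using assms smod_prod_subset_carrier by auto
  show "\<zero> \<in> smod_prod R L (smod_prod R M N)" by (rule smod_prod.zero)
  show "a \<oplus> b \<in> smod_prod R L (smod_prod R M N)"
    if "a \<in> smod_prod R L (smod_prod R M N)" "b \<in> smod_prod R L (smod_prod R M N)" for a b
    using smod_prod_add_closed[OF assms(1) c1] that by auto
  show "x \<otimes> n \<in> smod_prod R L (smod_prod R M N)" if "x \<in> smod_prod R L M" "n \<in> N" for x n
    using that(1)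
  proof (induction rule: smod_prod.induct)
    case zero
    have "n \<in> carrier R" using that assms by auto
    then show ?case by (auto intro: smod_prod.zero)
  next
    case (step a b z)
    have cz: "z \<in> carrier R" using step smod_prod_subset_carrier assms by auto
    have "(a \<otimes> b \<oplus> z) \<otimes> n = a \<otimes> (b \<otimes> n) \<oplus> z \<otimes> n"
      using step assms that cz by (auto simp: l_distr m_assoc subset_iff)
    moreover have "b \<otimes> n \<in> smod_prod R M N" using smod_prod_mult_mem assms step that by auto
    ultimately show ?case using step by (auto intro: smod_prod.step)
  qed
qed

lemma smod_prod_assoc:
  assumes "L \<subseteq> carrier R" "M \<subseteq> carrier R" "N \<subseteq> carrier R"
  shows "smod_prod R (smod_prod R L M) N = smod_prod R L (smod_prod R M N)"
proof
  show "smod_prod R (smod_prod R L M) N \<subseteq> smod_prod R L (smod_prod R M N)"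
    using smod_prod_assoc_subset assms by auto
  have cMN: "smod_prod R M N \<subseteq> carrier R" "smod_prod R N M \<subseteq> carrier R"
    "smod_prod R L M \<subseteq> carrier R" "smod_prod R M L \<subseteq> carrier R"
    using assms smod_prod_subset_carrier by auto
  have "smod_prod R L (smod_prod R M N) = smod_prod R (smod_prod R N M) L"
    using smod_prod_comm assms cMN by metis
  also have "\<dots> \<subseteq> smod_prod R N (smod_prod R M L)"
    using smod_prod_assoc_subset assms by auto
  also have "\<dots> = smod_prod R (smod_prod R L M) N"
    using smod_prod_comm assms cMN by metis
  finally show "smod_prod R L (smod_prod R M N) \<subseteq> smod_prod R (smod_prod R L M) N" .
qed

lemma smod_prod_uminus_closed:
  assumes "L \<subseteq> carrier R" "M \<subseteq> carrier R" "\<forall>x\<in>L. \<ominus> x \<in> L"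
    and "z \<in> smod_prod R L M"
  shows "\<ominus> z \<in> smod_prod R L M"
  using assms(4)
proof (induction rule: smod_prod.induct)
  case zero
  then show ?case by (auto intro: smod_prod.zero)
next
  case (step a b z)
  have cz: "z \<in> carrier R" using step smod_prod_subset_carrier assms by auto
  have "\<ominus> (a \<otimes> b \<oplus> z) = (\<ominus> a) \<otimes> b \<oplus> \<ominus> z"
    using step assms cz by (auto simp: minus_add l_minus subset_iff)
  then show ?case using step assms by (auto intro: smod_prod.step)
qed

lemma rsubmod_smod_prod:
  assumes "rsubmod R K L" "rsubmod R K M" "K \<subseteq> carrier R"
  shows "rsubmod R K (smod_prod R L M)"
proof -
  have c: "L \<subseteq> carrier R" "M \<subseteq> carrier R" using assms unfolding rsubmod_def by auto
  have "r \<otimes> z \<in> smod_prod R L M" if "r \<in> K" "z \<in> smod_prod R L M" for r z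
    using that(2)
  proof (induction rule: smod_prod.induct)
    case zero
    have "r \<in> carrier R" using that assms by auto
    then show ?case by (auto intro: smod_prod.zero)
  next
    case (step a b z)
    have cz: "z \<in> carrier R" using step smod_prod_subset_carrier c by auto
    have cr: "r \<in> carrier R" using that assms by auto
    have "r \<otimes> (a \<otimes> b \<oplus> z) = (r \<otimes> a) \<otimes> b \<oplus> r \<otimes> z"
      using step c cz cr by (auto simp: r_distr m_assoc subset_iff)
    moreover have "r \<otimes> a \<in> L" using assms(1) that step unfolding rsubmod_def by auto
    ultimately show ?case using step by (auto intro: smod_prod.step)
  qed
  then show ?thesis
    unfolding rsubmod_def using smod_prod_subset_carrier[OF c] smod_prod_add_closed[OF c] smod_prod_uminus_closed[OF c] assms(1)
    by (auto intro: smod_prod.zero simp: rsubmod_def)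
qed

lemma smod_prod_base_left:
  assumes "rsubmod R K L" "K \<subseteq> carrier R" "\<one> \<in> K"
  shows "smod_prod R K L = L"
proof
  have c: "L \<subseteq> carrier R" using assms unfolding rsubmod_def by auto
  show "smod_prod R K L \<subseteq> L"
    by (rule smod_prod_subsetI) (use assms in \<open>auto simp: rsubmod_def\<close>)
  show "L \<subseteq> smod_prod R K L"
  proof
    fix x assume "x \<in> L"
    then have "\<one> \<otimes> x \<in> smod_prod R K L" using smod_prod_mult_mem[OF assms(2) c] assms by auto
    then show "x \<in> smod_prod R K L" using c \<open>x \<in> L\<close> by auto
  qed
qed

lemma scale_subset_carrier:
  assumes "L \<subseteq> carrier R" "u \<in> carrier R"
  shows "scale R L u \<subseteq> carrier R"
  using assms unfolding scale_def by auto

lemma scale_scale: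
  assumes "L \<subseteq> carrier R" "u \<in> carrier R" "v \<in> carrier R"
  shows "scale R (scale R L u) v = scale R L (u \<otimes> v)"
  using assms unfolding scale_def image_image by (intro image_cong refl) (auto simp: m_assoc)

lemma scale_one:
  assumes "L \<subseteq> carrier R"
  shows "scale R L \<one> = L"
  using assms unfolding scale_def by (auto simp: subset_iff image_iff)

lemma smod_prod_scale_subset:
  assumes "L \<subseteq> carrier R" "M \<subseteq> carrier R" "u \<in> carrier R" "v \<in> carrier R"
  shows "smod_prod R (scale R L u) (scale R M v) \<subseteq> scale R (smod_prod R L M) (u \<otimes> v)"
proof (rule smod_prod_subsetI)
  have cLM: "smod_prod R L M \<subseteq> carrier R" using smod_prod_subset_carrier assms by auto
  have "\<zero> \<otimes> (u \<otimes> v) \<in> scale R (smod_prod R L M) (u \<otimes> v)"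
    by (rule scaleI) (rule smod_prod.zero)
  then show "\<zero> \<in> scale R (smod_prod R L M) (u \<otimes> v)" using assms by simp
  show "a \<oplus> b \<in> scale R (smod_prod R L M) (u \<otimes> v)"
    if ab: "a \<in> scale R (smod_prod R L M) (u \<otimes> v)" "b \<in> scale R (smod_prod R L M) (u \<otimes> v)" for a b
  proof -
    obtain a' b' where ab': "a' \<in> smod_prod R L M" "b' \<in> smod_prod R L M"
      "a = a' \<otimes> (u \<otimes> v)" "b = b' \<otimes> (u \<otimes> v)" using ab unfolding scale_def by blast
    moreover have "a' \<in> carrier R" "b' \<in> carrier R" using ab' cLM by auto
    ultimately have "a \<oplus> b = (a' \<oplus> b') \<otimes> (u \<otimes> v)" using assms by (simp add: l_distr)
    then show ?thesis using scaleI smod_prod_add_closed[OF assms(1,2) ab'(1,2)] by metis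
  qed
  show "x \<otimes> y \<in> scale R (smod_prod R L M) (u \<otimes> v)"
    if xy: "x \<in> scale R L u" "y \<in> scale R M v" for x y
  proof -
    obtain a b where ab: "a \<in> L" "b \<in> M" "x = a \<otimes> u" "y = b \<otimes> v"
      using xy unfolding scale_def by auto
    then have "x \<otimes> y = (a \<otimes> b) \<otimes> (u \<otimes> v)" using assms by (auto simp: m_ac subset_iff)
    then show ?thesis using scaleI smod_prod_mult_mem[OF assms(1,2) ab(1,2)] by metis
  qed
qed

lemma scale_smod_prod_subset:
  assumes "L \<subseteq> carrier R" "M \<subseteq> carrier R" "u \<in> carrier R" "v \<in> carrier R"
  shows "scale R (smod_prod R L M) (u \<otimes> v) \<subseteq> smod_prod R (scale R L u) (scale R M v)"
proof -
  let ?P = "{z \<in> carrier R. z \<otimes> (u \<otimes> v) \<in> smod_prod R (scale R L u) (scale R M v)}"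
  have cs: "scale R L u \<subseteq> carrier R" "scale R M v \<subseteq> carrier R"
    using scale_subset_carrier assms by auto
  have "smod_prod R L M \<subseteq> ?P"
  proof (rule smod_prod_subsetI)
    show "\<zero> \<in> ?P" using assms smod_prod.zero by auto
    show "a \<oplus> b \<in> ?P" if "a \<in> ?P" "b \<in> ?P" for a b
      using that smod_prod_add_closed[OF cs] assms by (auto simp: l_distr)
    show "x \<otimes> y \<in> ?P" if "x \<in> L" "y \<in> M" for x y
    proof -
      have "(x \<otimes> y) \<otimes> (u \<otimes> v) = (x \<otimes> u) \<otimes> (y \<otimes> v)"
        using that assms by (auto simp: m_ac subset_iff)
      then show ?thesis
        using that assms smod_prod_mult_mem[OF cs scaleI scaleI] by (auto simp: subset_iff)
    qed
  qed
  then show ?thesis unfolding scale_def by auto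
qed

lemma smod_prod_scale:
  assumes "L \<subseteq> carrier R" "M \<subseteq> carrier R" "u \<in> carrier R" "v \<in> carrier R"
  shows "smod_prod R (scale R L u) (scale R M v) = scale R (smod_prod R L M) (u \<otimes> v)"
  using smod_prod_scale_subset[OF assms] scale_smod_prod_subset[OF assms] by (rule subset_antisym)

lemma rsubmod_scale:
  assumes "rsubmod R K L" "u \<in> carrier R" "K \<subseteq> carrier R"
  shows "rsubmod R K (scale R L u)"
proof -
  have c: "L \<subseteq> carrier R" using assms unfolding rsubmod_def by auto
  have "\<zero> \<in> scale R L u"
    using scaleI[of \<zero> L R u] assms by (auto simp: rsubmod_def)
  moreover have "x \<oplus> y \<in> scale R L u" if xy: "x \<in> scale R L u" "y \<in> scale R L u" for x y
  proof -
    obtain a b where ab: "a \<in> L" "b \<in> L" "x = a \<otimes> u" "y = b \<otimes> u" using xy unfolding scale_def by blast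
    then have "x \<oplus> y = (a \<oplus> b) \<otimes> u" using assms c by (auto simp: l_distr subset_iff)
    then show ?thesis using scaleI[of "a \<oplus> b" L R u] ab assms unfolding rsubmod_def by auto
  qed
  moreover have "\<ominus> x \<in> scale R L u" if x: "x \<in> scale R L u" for x
  proof -
    obtain a where a: "a \<in> L" "x = a \<otimes> u" using x unfolding scale_def by auto
    then have "\<ominus> x = (\<ominus> a) \<otimes> u" using assms c by (auto simp: l_minus subset_iff)
    then show ?thesis using scaleI[of "\<ominus> a" L R u] a assms unfolding rsubmod_def by auto
  qed
  moreover have "r \<otimes> x \<in> scale R L u" if rx: "r \<in> K" "x \<in> scale R L u" for r x
  proof -
    obtain a where a: "a \<in> L" "x = a \<otimes> u" using rx unfolding scale_def by auto
    then have "r \<otimes> x = (r \<otimes> a) \<otimes> u" using assms c rx by (auto simp: m_assoc subset_iff)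
    then show ?thesis using scaleI[of "r \<otimes> a" L R u] a rx assms unfolding rsubmod_def by auto
  qed
  ultimately show ?thesis unfolding rsubmod_def using scale_subset_carrier[OF c assms(2)] by auto
qed

lemma smod_prod_subset_principal:
  assumes "N \<subseteq> scale R (carrier R) w" "N' \<subseteq> carrier R" "w \<in> carrier R"
  shows "smod_prod R N N' \<subseteq> scale R (carrier R) w"
proof (rule smod_prod_subsetI)
  show "\<zero> \<in> scale R (carrier R) w" using scaleI[of \<zero> "carrier R" R w] assms by simp
  show "a \<oplus> b \<in> scale R (carrier R) w"
    if ab: "a \<in> scale R (carrier R) w" "b \<in> scale R (carrier R) w" for a b
  proof -
    obtain c d where "c \<in> carrier R" "d \<in> carrier R" "a = c \<otimes> w" "b = d \<otimes> w"
      using ab unfolding scale_def by blast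
    then show ?thesis using scaleI[of "c \<oplus> d" "carrier R" R w] assms by (simp add: l_distr)
  qed
  show "x \<otimes> y \<in> scale R (carrier R) w" if xy: "x \<in> N" "y \<in> N'" for x y
  proof -
    obtain c where "c \<in> carrier R" "x = c \<otimes> w" using xy assms unfolding scale_def by auto
    then have "x \<otimes> y = (c \<otimes> y) \<otimes> w" using xy assms by (auto simp: m_ac subset_iff)
    then show ?thesis using scaleI[of "c \<otimes> y" "carrier R" R w] \<open>c \<in> carrier R\<close> xy assms by auto
  qed
qed

lemma Ginv_rsubmod: "L \<in> Ginv R K \<Longrightarrow> rsubmod R K L"
  unfolding Ginv_def inv_ideal_def by auto

lemma Ginv_subset_carrier: "L \<in> Ginv R K \<Longrightarrow> L \<subseteq> carrier R"
  unfolding Ginv_def inv_ideal_def rsubmod_def by auto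

lemma scale_in_Ginv:
  assumes K: "K \<subseteq> carrier R" and L: "L \<in> Ginv R K" and u: "u \<in> Units R"
  shows "scale R L u \<in> Ginv R K"
proof -
  obtain L' where L': "rsubmod R K L'" "smod_prod R L L' = K"
    using L unfolding Ginv_def inv_ideal_def by auto
  have cL: "L \<subseteq> carrier R" "L' \<subseteq> carrier R" using Ginv_subset_carrier[OF L] L'(1) unfolding rsubmod_def by auto
  have cu: "u \<in> carrier R" "inv u \<in> carrier R" using u by auto
  have "smod_prod R (scale R L u) (scale R L' (inv u)) = scale R K (u \<otimes> inv u)"
    using smod_prod_scale[OF cL cu] L' by simp
  also have "\<dots> = K" using u K scale_one by simp
  finally show ?thesis unfolding Ginv_def inv_ideal_def
    using rsubmod_scale[OF Ginv_rsubmod[OF L] cu(1) K] rsubmod_scale[OF L'(1) cu(2) K] by auto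
qed

lemma smod_prod_in_Ginv:
  assumes K: "K \<subseteq> carrier R" "\<one> \<in> K" and L: "L \<in> Ginv R K" and M: "M \<in> Ginv R K"
  shows "smod_prod R L M \<in> Ginv R K"
proof -
  obtain L' where L': "rsubmod R K L'" "smod_prod R L L' = K"
    using L unfolding Ginv_def inv_ideal_def by auto
  obtain M' where M': "rsubmod R K M'" "smod_prod R M M' = K"
    using M unfolding Ginv_def inv_ideal_def by auto
  have c: "L \<subseteq> carrier R" "L' \<subseteq> carrier R" "M \<subseteq> carrier R" "M' \<subseteq> carrier R"
    using Ginv_subset_carrier[OF L] Ginv_subset_carrier[OF M] L'(1) M'(1) unfolding rsubmod_def by auto
  have "smod_prod R (smod_prod R L M) (smod_prod R L' M') =
        smod_prod R L (smod_prod R M (smod_prod R M' L'))"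
    using smod_prod_assoc smod_prod_comm smod_prod_subset_carrier c by metis
  also have "\<dots> = smod_prod R L (smod_prod R (smod_prod R M M') L')"
    using smod_prod_assoc smod_prod_subset_carrier c by metis
  also have "\<dots> = smod_prod R L L'" using M' smod_prod_base_left[OF L'(1) K] by simp
  also have "\<dots> = K" by fact
  finally show ?thesis unfolding Ginv_def inv_ideal_def
    using rsubmod_smod_prod[OF Ginv_rsubmod[OF L] Ginv_rsubmod[OF M] K(1)]
      rsubmod_smod_prod[OF L'(1) M'(1) K(1)] by auto
qed

lemma Ccls_eq_scale_image:
  assumes K: "K \<subseteq> carrier R" and L: "L \<in> Ginv R K"
  shows "Ccls R K L = scale R L ` Units R"
  unfolding Ccls_def using scale_in_Ginv[OF K L] by auto

lemma Ccls_self: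
  assumes K: "K \<subseteq> carrier R" and L: "L \<in> Ginv R K"
  shows "L \<in> Ccls R K L"
  unfolding Ccls_eq_scale_image[OF K L] using scale_one[OF Ginv_subset_carrier[OF L]]
  by (metis Units_one_closed image_eqI)

lemma Ccls_scale:
  assumes K: "K \<subseteq> carrier R" and L: "L \<in> Ginv R K" and u: "u \<in> Units R"
  shows "Ccls R K (scale R L u) = Ccls R K L"
proof -
  have c: "L \<subseteq> carrier R" using Ginv_subset_carrier L by auto
  have "scale R (scale R L u) ` Units R = scale R L ` Units R"
  proof
    show "scale R (scale R L u) ` Units R \<subseteq> scale R L ` Units R"
      using scale_scale[OF c] u by auto
    show "scale R L ` Units R \<subseteq> scale R (scale R L u) ` Units R"
    proof
      fix NN assume "NN \<in> scale R L ` Units R"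
      then obtain w where w: "w \<in> Units R" "NN = scale R L w" by auto
      have "w = u \<otimes> (inv u \<otimes> w)" using u w
        by (metis Units_closed Units_inv_closed Units_r_inv l_one m_assoc)
      moreover have "scale R (scale R L u) (inv u \<otimes> w) = scale R L (u \<otimes> (inv u \<otimes> w))"
        using w u scale_scale[OF c, of u "inv u \<otimes> w"] by (simp add: Units_closed)
      ultimately have "NN = scale R (scale R L u) (inv u \<otimes> w)"
        using w by simp
      then show "NN \<in> scale R (scale R L u) ` Units R" using u w by auto
    qed
  qed
  then show ?thesis using Ccls_eq_scale_image[OF K] scale_in_Ginv[OF K L u] L by simp
qed

lemma Ccls_eqD:
  assumes K: "K \<subseteq> carrier R" and L: "L \<in> Ginv R K" and M: "M \<in> Ginv R K"
    and eq: "Ccls R K L = Ccls R K M"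
  shows "\<exists>u\<in>Units R. M = scale R L u"
proof -
  have "M \<in> Ccls R K L" using Ccls_self[OF K M] eq by simp
  then show ?thesis using Ccls_eq_scale_image[OF K L] by auto
qed

lemma Cgrp_mult_Ccls:
  assumes K: "K \<subseteq> carrier R" "\<one> \<in> K" and L: "L \<in> Ginv R K" and M: "M \<in> Ginv R K"
  shows "Ccls R K L \<otimes>\<^bsub>Cgrp R K\<^esub> Ccls R K M = Ccls R K (smod_prod R L M)"
proof -
  have c: "L \<subseteq> carrier R" "M \<subseteq> carrier R" using Ginv_subset_carrier L M by auto
  have LM: "smod_prod R L M \<in> Ginv R K" using smod_prod_in_Ginv K L M by auto
  have "{N. \<exists>L1\<in>Ccls R K L. \<exists>M1\<in>Ccls R K M. N = smod_prod R L1 M1} = scale R (smod_prod R L M) ` Units R"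
  proof
    show "{N. \<exists>L1\<in>Ccls R K L. \<exists>M1\<in>Ccls R K M. N = smod_prod R L1 M1} \<subseteq> scale R (smod_prod R L M) ` Units R"
      unfolding Ccls_eq_scale_image[OF K(1) L] Ccls_eq_scale_image[OF K(1) M] using smod_prod_scale[OF c] by auto
    show "scale R (smod_prod R L M) ` Units R \<subseteq> {N. \<exists>L1\<in>Ccls R K L. \<exists>M1\<in>Ccls R K M. N = smod_prod R L1 M1}"
    proof
      fix NN assume "NN \<in> scale R (smod_prod R L M) ` Units R"
      then obtain w where w: "w \<in> Units R" "NN = scale R (smod_prod R L M) w" by auto
      have "NN = smod_prod R (scale R L w) (scale R M \<one>)" using smod_prod_scale[OF c] w by auto
      moreover have "scale R L w \<in> Ccls R K L" "scale R M \<one> \<in> Ccls R K M"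
        using Ccls_eq_scale_image[OF K(1) L] Ccls_eq_scale_image[OF K(1) M] w by auto
      ultimately show "NN \<in> {N. \<exists>L1\<in>Ccls R K L. \<exists>M1\<in>Ccls R K M. N = smod_prod R L1 M1}" by auto
    qed
  qed
  then show ?thesis unfolding Cgrp_def using Ccls_eq_scale_image[OF K(1) LM] by simp
qed

end

context ring_hom_cring
begin

lemma image_smod_prod:
  assumes "L \<subseteq> carrier R" "M \<subseteq> carrier R"
  shows "h ` smod_prod R L M = smod_prod S (h ` L) (h ` M)"
proof
  have hLM: "h ` L \<subseteq> carrier S" "h ` M \<subseteq> carrier S" using assms by auto
  have "smod_prod R L M \<subseteq> {x \<in> carrier R. h x \<in> smod_prod S (h ` L) (h ` M)}"
    by (rule R.smod_prod_subsetI)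
      (use assms S.smod_prod_add_closed[OF hLM] S.smod_prod_mult_mem[OF hLM] in
        \<open>auto intro: smod_prod.zero simp: subset_iff\<close>)
  then show "h ` smod_prod R L M \<subseteq> smod_prod S (h ` L) (h ` M)" by auto
  have cLM: "smod_prod R L M \<subseteq> carrier R" using R.smod_prod_subset_carrier[OF assms] .
  show "smod_prod S (h ` L) (h ` M) \<subseteq> h ` smod_prod R L M"
  proof (rule S.smod_prod_subsetI)
    show "\<zero>\<^bsub>S\<^esub> \<in> h ` smod_prod R L M"
      by (rule image_eqI[where x="\<zero>"]) (simp_all add: smod_prod.zero)
    show "a \<oplus>\<^bsub>S\<^esub> b \<in> h ` smod_prod R L M" if ab: "a \<in> h ` smod_prod R L M" "b \<in> h ` smod_prod R L M" for a b
    proof -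
      obtain x y where xy: "x \<in> smod_prod R L M" "y \<in> smod_prod R L M" "a = h x" "b = h y"
        using ab by blast
      moreover have "x \<in> carrier R" "y \<in> carrier R" using xy cLM by auto
      ultimately have "a \<oplus>\<^bsub>S\<^esub> b = h (x \<oplus> y)" by simp
      then show ?thesis using R.smod_prod_add_closed[OF assms xy(1,2)] by blast
    qed
    show "a \<otimes>\<^bsub>S\<^esub> b \<in> h ` smod_prod R L M" if ab: "a \<in> h ` L" "b \<in> h ` M" for a b
    proof -
      obtain x y where xy: "x \<in> L" "y \<in> M" "a = h x" "b = h y" using ab by blast
      moreover have "x \<in> carrier R" "y \<in> carrier R" using xy assms by auto
      ultimately have "a \<otimes>\<^bsub>S\<^esub> b = h (x \<otimes> y)" by simp
      then show ?thesis using R.smod_prod_mult_mem[OF assms xy(1,2)] by blast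
    qed
  qed
qed

lemma image_scale:
  assumes "L \<subseteq> carrier R" "u \<in> carrier R"
  shows "h ` scale R L u = scale S (h ` L) (h u)"
  unfolding scale_def image_image using assms by (intro image_cong refl) (auto simp: subset_iff)

lemma rsubmod_image:
  assumes "K \<subseteq> carrier R" "rsubmod R K L"
  shows "rsubmod S (h ` K) (h ` L)"
proof -
  have c: "L \<subseteq> carrier R" using assms unfolding rsubmod_def by auto
  have 1: "h x \<oplus>\<^bsub>S\<^esub> h y \<in> h ` L" if "x \<in> L" "y \<in> L" for x y
  proof -
    have "x \<in> carrier R" "y \<in> carrier R" using that c by auto
    then have "h x \<oplus>\<^bsub>S\<^esub> h y = h (x \<oplus> y)" using ring_hom_add[OF homh, of x y] by simp
    then show ?thesis using that assms unfolding rsubmod_def by auto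
  qed
  have 2: "\<ominus>\<^bsub>S\<^esub> h x \<in> h ` L" if "x \<in> L" for x
  proof -
    have "\<ominus>\<^bsub>S\<^esub> h x = h (\<ominus> x)" using that c by auto
    then show ?thesis using that assms unfolding rsubmod_def by auto
  qed
  have 3: "h r \<otimes>\<^bsub>S\<^esub> h x \<in> h ` L" if "r \<in> K" "x \<in> L" for r x
  proof -
    have "x \<in> carrier R" "r \<in> carrier R" using that c assms by auto
    then have "h r \<otimes>\<^bsub>S\<^esub> h x = h (r \<otimes> x)" by simp
    then show ?thesis using that assms unfolding rsubmod_def by auto
  qed
  have 0: "\<zero>\<^bsub>S\<^esub> \<in> h ` L" using assms unfolding rsubmod_def by (auto intro!: image_eqI[where x="\<zero>"])
  show ?thesis unfolding rsubmod_def using c 0 1 2 3 by auto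
qed

lemma image_in_Ginv:
  assumes "K \<subseteq> carrier R" "L \<in> Ginv R K"
  shows "h ` L \<in> Ginv S (h ` K)"
proof -
  obtain L' where L': "rsubmod R K L'" "smod_prod R L L' = K"
    using assms unfolding Ginv_def inv_ideal_def by auto
  have c: "L \<subseteq> carrier R" "L' \<subseteq> carrier R"
    using R.Ginv_subset_carrier[OF assms(2)] L'(1) unfolding rsubmod_def by auto
  show ?thesis unfolding Ginv_def inv_ideal_def
    using rsubmod_image[OF assms(1) R.Ginv_rsubmod[OF assms(2)]] rsubmod_image[OF assms(1) L'(1)]
      image_smod_prod[OF c] L'(2) by auto
qed

lemma hom_in_Units:
  assumes "u \<in> Units R"
  shows "h u \<in> Units S"
proof -
  have c: "u \<in> carrier R" "inv u \<in> carrier R" using assms by auto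
  have 1: "h u \<otimes>\<^bsub>S\<^esub> h (inv u) = \<one>\<^bsub>S\<^esub>" using assms c
    by (simp add: hom_mult[symmetric])
  have 2: "h (inv u) \<otimes>\<^bsub>S\<^esub> h u = \<one>\<^bsub>S\<^esub>" using assms c
    by (simp add: hom_mult[symmetric])
  show ?thesis unfolding Units_def using 1 2 c by auto
qed

lemma Cmap_Ccls:
  assumes K: "K \<subseteq> carrier R" and L: "L \<in> Ginv R K"
  shows "Cmap R S h K (Ccls R K L) = Ccls S (h ` K) (h ` L)"
proof -
  have c: "L \<subseteq> carrier R" using R.Ginv_subset_carrier L by auto
  have K': "h ` K \<subseteq> carrier S" using K by auto
  have "Cmap R S h K (Ccls R K L) = {N \<in> Ginv S (h ` K). \<exists>u\<in>Units S. N = scale S (h ` L) u}"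
  proof -
    have "(\<exists>L1\<in>Ccls R K L. \<exists>u\<in>Units S. N = scale S (h ` L1) u) \<longleftrightarrow> (\<exists>u\<in>Units S. N = scale S (h ` L) u)"
      for N
    proof
      assume "\<exists>L1\<in>Ccls R K L. \<exists>u\<in>Units S. N = scale S (h ` L1) u"
      then obtain v u where vu: "v \<in> Units R" "u \<in> Units S" "N = scale S (h ` scale R L v) u"
        unfolding R.Ccls_eq_scale_image[OF K L] by auto
      have cv: "v \<in> carrier R" "h v \<in> carrier S" "u \<in> carrier S" "h ` L \<subseteq> carrier S"
        using vu c by auto
      have "N = scale S (scale S (h ` L) (h v)) u" using vu image_scale[OF c cv(1)] by simp
      also have "\<dots> = scale S (h ` L) (h v \<otimes>\<^bsub>S\<^esub> u)"
        using S.scale_scale[OF cv(4,2,3)] .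
      finally have "N = scale S (h ` L) (h v \<otimes>\<^bsub>S\<^esub> u)" .
      then show "\<exists>u\<in>Units S. N = scale S (h ` L) u" using vu hom_in_Units by auto
    next
      assume "\<exists>u\<in>Units S. N = scale S (h ` L) u"
      then show "\<exists>L1\<in>Ccls R K L. \<exists>u\<in>Units S. N = scale S (h ` L1) u"
        using R.Ccls_self[OF K L] by auto
    qed
    then show ?thesis unfolding Cmap_def by auto
  qed
  also have "\<dots> = Ccls S (h ` K) (h ` L)" unfolding Ccls_def by auto
  finally show ?thesis .
qed

lemma Cmap_hom:
  assumes K: "K \<subseteq> carrier R" "\<one> \<in> K"
  shows "Cmap R S h K \<in> hom (Cgrp R K) (Cgrp S (h ` K))"
proof (rule homI)
  have K': "h ` K \<subseteq> carrier S" "\<one>\<^bsub>S\<^esub> \<in> h ` K"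
    using K by (auto intro!: image_eqI[where x="\<one>"])
  fix x y assume "x \<in> carrier (Cgrp R K)" "y \<in> carrier (Cgrp R K)"
  then obtain L M where L: "L \<in> Ginv R K" "x = Ccls R K L" and M: "M \<in> Ginv R K" "y = Ccls R K M"
    unfolding Cgrp_def by auto
  have c: "L \<subseteq> carrier R" "M \<subseteq> carrier R" using L M R.Ginv_subset_carrier by auto
  show "Cmap R S h K x \<in> carrier (Cgrp S (h ` K))"
    using L Cmap_Ccls[OF K(1) L(1)] image_in_Ginv[OF K(1) L(1)] unfolding Cgrp_def by auto
  have "Cmap R S h K (x \<otimes>\<^bsub>Cgrp R K\<^esub> y) = Cmap R S h K (Ccls R K (smod_prod R L M))"
    using R.Cgrp_mult_Ccls[OF K L(1) M(1)] L M by simp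
  also have "\<dots> = Ccls S (h ` K) (smod_prod S (h ` L) (h ` M))"
    using Cmap_Ccls[OF K(1) R.smod_prod_in_Ginv[OF K L(1) M(1)]] image_smod_prod[OF c] by simp
  also have "\<dots> = Ccls S (h ` K) (h ` L) \<otimes>\<^bsub>Cgrp S (h ` K)\<^esub> Ccls S (h ` K) (h ` M)"
    using S.Cgrp_mult_Ccls[OF K' image_in_Ginv[OF K(1) L(1)] image_in_Ginv[OF K(1) M(1)]] by simp
  also have "\<dots> = Cmap R S h K x \<otimes>\<^bsub>Cgrp S (h ` K)\<^esub> Cmap R S h K y"
    using Cmap_Ccls[OF K(1)] L M by simp
  finally show "Cmap R S h K (x \<otimes>\<^bsub>Cgrp R K\<^esub> y) = Cmap R S h K x \<otimes>\<^bsub>Cgrp S (h ` K)\<^esub> Cmap R S h K y" .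
qed

end

section \<open>Ring retractions\<close>

locale cring_retraction = R: cring R + S: cring S
  for R (structure) and S (structure) +
  fixes \<phi> and \<mu>
  assumes phi_hom: "\<phi> \<in> ring_hom R S" and mu_hom: "\<mu> \<in> ring_hom S R"
    and retraction: "\<And>b. b \<in> carrier R \<Longrightarrow> \<mu> (\<phi> b) = b"
begin

sublocale phi: ring_hom_cring R S \<phi>
  by unfold_locales (rule phi_hom)

sublocale mu: ring_hom_cring S R \<mu>
  by unfold_locales (rule mu_hom)

lemma mu_phi_image: "Y \<subseteq> carrier R \<Longrightarrow> \<mu> ` \<phi> ` Y = Y"
  unfolding image_image using retraction by (simp add: subset_iff)

lemma Cmap_inj:
  assumes K: "K \<subseteq> carrier R"
  shows "inj_on (Cmap R S \<phi> K) (carrier (Cgrp R K))"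
proof (rule inj_onI)
  fix x y assume "x \<in> carrier (Cgrp R K)" "y \<in> carrier (Cgrp R K)"
    and eq: "Cmap R S \<phi> K x = Cmap R S \<phi> K y"
  then obtain L M where L: "L \<in> Ginv R K" "x = Ccls R K L" and M: "M \<in> Ginv R K" "y = Ccls R K M"
    unfolding Cgrp_def by auto
  have c: "L \<subseteq> carrier R" "M \<subseteq> carrier R" using L M R.Ginv_subset_carrier by auto
  have "Ccls S (\<phi> ` K) (\<phi> ` L) = Ccls S (\<phi> ` K) (\<phi> ` M)"
    using eq phi.Cmap_Ccls[OF K] L M by simp
  then obtain w where w: "w \<in> Units S" "\<phi> ` M = scale S (\<phi> ` L) w"
    using S.Ccls_eqD[OF _ phi.image_in_Ginv[OF K L(1)] phi.image_in_Ginv[OF K M(1)]] K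
    by (metis image_subset_iff phi.hom_closed subsetD)
  have "M = \<mu> ` scale S (\<phi> ` L) w" using w(2) mu_phi_image[OF c(2)] by simp
  also have "\<dots> = scale R L (\<mu> w)"
    using mu.image_scale[of "\<phi> ` L" w] w(1) c(1) mu_phi_image[OF c(1)] by auto
  finally have "Ccls R K M = Ccls R K L"
    using R.Ccls_scale[OF K L(1) mu.hom_in_Units[OF w(1)]] by simp
  then show "x = y" using L M by simp
qed

lemma smod_prod_retraction_multiplier:
  assumes N: "N \<subseteq> carrier S" "N' \<subseteq> carrier S"
    and fixed: "\<And>x. x \<in> smod_prod S N N' \<Longrightarrow> \<phi> (\<mu> x) = x"
    and z: "z \<in> smod_prod S N N'"
  shows "\<exists>w\<in>carrier S. \<forall>n\<in>N. \<phi> (\<mu> n) \<otimes>\<^bsub>S\<^esub> w = n \<otimes>\<^bsub>S\<^esub> z"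
proof -
  let ?P = "{z \<in> carrier S. \<exists>w\<in>carrier S. \<forall>n\<in>N. \<phi> (\<mu> n) \<otimes>\<^bsub>S\<^esub> w = n \<otimes>\<^bsub>S\<^esub> z}"
  have "smod_prod S N N' \<subseteq> ?P"
  proof (rule S.smod_prod_subsetI)
    show "\<zero>\<^bsub>S\<^esub> \<in> ?P" using N by (auto intro!: bexI[where x="\<zero>\<^bsub>S\<^esub>"])
    show "a \<oplus>\<^bsub>S\<^esub> b \<in> ?P" if ab: "a \<in> ?P" "b \<in> ?P" for a b
    proof -
      obtain u v where "u \<in> carrier S" "v \<in> carrier S"
        "\<forall>n\<in>N. \<phi> (\<mu> n) \<otimes>\<^bsub>S\<^esub> u = n \<otimes>\<^bsub>S\<^esub> a" "\<forall>n\<in>N. \<phi> (\<mu> n) \<otimes>\<^bsub>S\<^esub> v = n \<otimes>\<^bsub>S\<^esub> b"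
        using ab by auto
      then show ?thesis
        using ab N by (auto simp: S.r_distr subset_iff intro!: bexI[where x="u \<oplus>\<^bsub>S\<^esub> v"])
    qed
    show "a \<otimes>\<^bsub>S\<^esub> b \<in> ?P" if ab: "a \<in> N" "b \<in> N'" for a b
    proof -
      have "\<phi> (\<mu> n) \<otimes>\<^bsub>S\<^esub> (a \<otimes>\<^bsub>S\<^esub> \<phi> (\<mu> b)) = n \<otimes>\<^bsub>S\<^esub> (a \<otimes>\<^bsub>S\<^esub> b)" if n: "n \<in> N" for n
      proof -
        have cn: "n \<in> carrier S" "a \<in> carrier S" "b \<in> carrier S" using n ab N by auto
        have "\<phi> (\<mu> n) \<otimes>\<^bsub>S\<^esub> \<phi> (\<mu> b) = \<phi> (\<mu> (n \<otimes>\<^bsub>S\<^esub> b))" using cn by simp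
        also have "\<dots> = n \<otimes>\<^bsub>S\<^esub> b" using fixed S.smod_prod_mult_mem[OF N n \<open>b \<in> N'\<close>] by simp
        finally have "\<phi> (\<mu> n) \<otimes>\<^bsub>S\<^esub> \<phi> (\<mu> b) = n \<otimes>\<^bsub>S\<^esub> b" .
        then show ?thesis using cn by (metis S.m_lcomm phi.hom_closed mu.hom_closed)
      qed
      moreover have "a \<otimes>\<^bsub>S\<^esub> \<phi> (\<mu> b) \<in> carrier S" using ab N by (auto simp: subset_iff)
      ultimately show ?thesis using ab N by auto
    qed
  qed
  then show ?thesis using z by auto
qed

lemma Ginv_eq_scale_contraction:
  assumes K: "K \<subseteq> carrier R" "\<one> \<in> K" and N: "N \<in> Ginv S (\<phi> ` K)"
  shows "\<exists>w\<in>Units S. N = scale S (\<phi> ` \<mu> ` N) w"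
proof -
  obtain N' where N': "rsubmod S (\<phi> ` K) N'" "smod_prod S N N' = \<phi> ` K"
    using N unfolding Ginv_def inv_ideal_def by auto
  have cN: "N \<subseteq> carrier S" "N' \<subseteq> carrier S"
    using S.Ginv_subset_carrier[OF N] N'(1) unfolding rsubmod_def by auto
  have one: "\<one>\<^bsub>S\<^esub> \<in> smod_prod S N N'" using N'(2) K by force
  have "\<phi> (\<mu> x) = x" if "x \<in> smod_prod S N N'" for x
    using that N'(2) retraction K by auto
  then obtain w where w: "w \<in> carrier S" "\<forall>n\<in>N. \<phi> (\<mu> n) \<otimes>\<^bsub>S\<^esub> w = n"
    using smod_prod_retraction_multiplier[OF cN _ one] cN by (metis S.r_one subsetD)
  have "N \<subseteq> scale S (carrier S) w"
  proof
    fix n assume "n \<in> N"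
    then have "n = \<phi> (\<mu> n) \<otimes>\<^bsub>S\<^esub> w" using w by simp
    then show "n \<in> scale S (carrier S) w"
      using scaleI[of "\<phi> (\<mu> n)" "carrier S" S w] \<open>n \<in> N\<close> cN by auto
  qed
  then have "\<one>\<^bsub>S\<^esub> \<in> scale S (carrier S) w"
    using S.smod_prod_subset_principal[OF _ cN(2) w(1)] one by blast
  then have "w \<in> Units S"
    using w(1) unfolding scale_def Units_def by (auto dest: sym simp: S.m_comm)
  moreover have "scale S (\<phi> ` \<mu> ` N) w = N"
    using w(2) unfolding scale_def image_image by simp
  ultimately show ?thesis by auto
qed

lemma Cmap_surj:
  assumes K: "K \<subseteq> carrier R" "\<one> \<in> K"
  shows "Cmap R S \<phi> K ` carrier (Cgrp R K) = carrier (Cgrp S (\<phi> ` K))"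
proof
  show "Cmap R S \<phi> K ` carrier (Cgrp R K) \<subseteq> carrier (Cgrp S (\<phi> ` K))"
    using phi.Cmap_hom[OF K] unfolding hom_def by auto
  show "carrier (Cgrp S (\<phi> ` K)) \<subseteq> Cmap R S \<phi> K ` carrier (Cgrp R K)"
  proof
    fix y assume "y \<in> carrier (Cgrp S (\<phi> ` K))"
    then obtain N where N: "N \<in> Ginv S (\<phi> ` K)" "y = Ccls S (\<phi> ` K) N"
      unfolding Cgrp_def by auto
    obtain w where w: "w \<in> Units S" "N = scale S (\<phi> ` \<mu> ` N) w"
      using Ginv_eq_scale_contraction[OF K N(1)] by blast
    have L: "\<mu> ` N \<in> Ginv R K"
      using mu.image_in_Ginv[OF _ N(1)] mu_phi_image[OF K(1)] K(1) by auto
    have "y = Ccls S (\<phi> ` K) (\<phi> ` \<mu> ` N)"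
      using N(2) w S.Ccls_scale[OF _ phi.image_in_Ginv[OF K(1) L] w(1)] K(1) by auto
    also have "\<dots> = Cmap R S \<phi> K (Ccls R K (\<mu> ` N))"
      using phi.Cmap_Ccls[OF K(1) L] by simp
    finally show "y \<in> Cmap R S \<phi> K ` carrier (Cgrp R K)"
      using L unfolding Cgrp_def by auto
  qed
qed

theorem Cmap_iso:
  assumes "K \<subseteq> carrier R" "\<one> \<in> K"
  shows "Cmap R S \<phi> K \<in> iso (Cgrp R K) (Cgrp S (\<phi> ` K))"
  unfolding iso_def bij_betw_def
  using phi.Cmap_hom Cmap_inj Cmap_surj assms by blast

end

section \<open>Finitely supported functions on pairs and their convolution\<close>

definition supp :: "('b \<times> 'b \<Rightarrow> int) \<Rightarrow> ('b \<times> 'b) set" where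
  "supp f = {p. f p \<noteq> 0}"

abbreviation delta_at :: "'b \<times> 'b \<Rightarrow> ('b \<times> 'b \<Rightarrow> int)" where
  "delta_at q \<equiv> delta (fst q) (snd q)"

definition pair_mult :: "('b,'m) ring_scheme \<Rightarrow> 'b \<times> 'b \<Rightarrow> 'b \<times> 'b \<Rightarrow> 'b \<times> 'b" where
  "pair_mult B q r = (fst q \<otimes>\<^bsub>B\<^esub> fst r, snd q \<otimes>\<^bsub>B\<^esub> snd r)"

lemma delta_at_apply: "delta_at q p = (if p = q then 1 else 0)"
  unfolding delta_def by (cases q) auto

lemma supp_delta_at: "supp (delta_at q) = {q}"
  unfolding supp_def delta_at_apply by auto

lemma supp_delta: "supp (delta x y) = {(x, y)}"
  unfolding supp_def delta_def by auto

lemma supp_zero: "supp (\<lambda>_. 0) = {}"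
  unfolding supp_def by auto

lemma fsums_iff: "f \<in> fsums B \<longleftrightarrow> finite (supp f) \<and> supp f \<subseteq> carrier B \<times> carrier B"
  unfolding fsums_def supp_def by auto

lemma supp_lincomb: "supp (\<lambda>p. f p + c * g p) \<subseteq> supp f \<union> supp g"
  unfolding supp_def by auto

lemma fsums_lincomb: "f \<in> fsums B \<Longrightarrow> g \<in> fsums B \<Longrightarrow> (\<lambda>p. f p + c * g p) \<in> fsums B"
  unfolding fsums_iff using supp_lincomb[of f c g] by (meson finite_Un finite_subset le_sup_iff order_trans)

lemma fsums_zero: "(\<lambda>_. 0) \<in> fsums B"
  unfolding fsums_iff supp_zero by auto

lemma fsums_delta_at: "q \<in> carrier B \<times> carrier B \<Longrightarrow> delta_at q \<in> fsums B"
  unfolding fsums_iff supp_delta_at by auto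

lemma fsums_delta: "x \<in> carrier B \<Longrightarrow> y \<in> carrier B \<Longrightarrow> delta x y \<in> fsums B"
  using fsums_delta_at[of "(x, y)" B] by simp

lemma fsums_diff: "f \<in> fsums B \<Longrightarrow> g \<in> fsums B \<Longrightarrow> (\<lambda>p. f p - g p) \<in> fsums B"
  using fsums_lincomb[of f B g "-1"] by simp

lemma fsums_add: "f \<in> fsums B \<Longrightarrow> g \<in> fsums B \<Longrightarrow> (\<lambda>p. f p + g p) \<in> fsums B"
  using fsums_lincomb[of f B g "1"] by simp

lemma fsums_uminus: "g \<in> fsums B \<Longrightarrow> (\<lambda>p. - g p) \<in> fsums B"
  unfolding fsums_iff supp_def by auto

lemma fsums_induct[consumes 1, case_names zero step]:
  assumes f: "f \<in> fsums B" and z: "P (\<lambda>_. 0)"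
    and st: "\<And>f q c. f \<in> fsums B \<Longrightarrow> q \<in> carrier B \<times> carrier B \<Longrightarrow> P f \<Longrightarrow> P (\<lambda>p. f p + c * delta_at q p)"
  shows "P f"
proof -
  have "\<forall>f. supp f = S \<longrightarrow> S \<subseteq> carrier B \<times> carrier B \<longrightarrow> P f" if "finite S" for S
    using that
  proof (induction S rule: finite_induct)
    case empty
    show ?case
    proof (intro allI impI)
      fix f :: "'a \<times> 'a \<Rightarrow> int" assume "supp f = {}"
      then have "f = (\<lambda>_. 0)" unfolding supp_def by auto
      then show "P f" using z by simp
    qed
  next
    case (insert q S)
    show ?case
    proof (intro allI impI)
      fix f :: "'a \<times> 'a \<Rightarrow> int" assume sf: "supp f = insert q S" and sc: "insert q S \<subseteq> carrier B \<times> carrier B"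
      define f' where "f' = f(q := 0)"
      have sf': "supp f' = S" using sf insert(2) unfolding f'_def supp_def by auto
      have "P f'" using insert(3) sf' sc by auto
      moreover have "f' \<in> fsums B" using sf' sc insert(1) unfolding fsums_iff by auto
      moreover have "f = (\<lambda>p. f' p + f q * delta_at q p)" unfolding f'_def delta_at_apply by auto
      ultimately show "P f" using st[of f' q "f q"] sc by auto
    qed
  qed
  then show ?thesis using f unfolding fsums_iff by auto
qed

lemma conv_eq_sum:
  assumes "finite S1" "finite S2" "supp f \<subseteq> S1" "supp g \<subseteq> S2"
  shows "conv B f g p = (\<Sum>q\<in>S1. \<Sum>r\<in>S2. if pair_mult B q r = p then f q * g r else 0)"
proof -
  let ?F = "\<lambda>(q, r). if pair_mult B q r = p then f q * g r else 0"
  have "(\<Sum>x\<in>S1 \<times> S2. ?F x) = (\<Sum>x\<in>supp f \<times> supp g. ?F x)"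
    by (rule sum.mono_neutral_right) (use assms in \<open>auto simp: supp_def\<close>)
  moreover have "conv B f g p = (\<Sum>x\<in>supp f \<times> supp g. ?F x)"
    unfolding conv_def supp_def pair_mult_def by simp
  ultimately show ?thesis by (simp add: sum.cartesian_product)
qed

lemma conv_lincomb_right:
  assumes "finite (supp f)" "finite (supp g)" "finite (supp h)"
  shows "conv B f (\<lambda>p. g p + c * h p) = (\<lambda>p. conv B f g p + c * conv B f h p)"
proof
  fix p
  let ?S = "supp g \<union> supp h"
  have fS: "finite ?S" using assms by auto
  have "conv B f (\<lambda>p. g p + c * h p) p =
      (\<Sum>q\<in>supp f. \<Sum>r\<in>?S. if pair_mult B q r = p then f q * (g r + c * h r) else 0)"
    by (rule conv_eq_sum) (use assms supp_lincomb in auto)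
  also have "\<dots> = (\<Sum>q\<in>supp f. \<Sum>r\<in>?S. (if pair_mult B q r = p then f q * g r else 0) + c * (if pair_mult B q r = p then f q * h r else 0))"
    by (intro sum.cong refl) (auto simp: algebra_simps)
  also have "\<dots> = (\<Sum>q\<in>supp f. \<Sum>r\<in>?S. if pair_mult B q r = p then f q * g r else 0) + c * (\<Sum>q\<in>supp f. \<Sum>r\<in>?S. if pair_mult B q r = p then f q * h r else 0)"
    by (simp add: sum.distrib sum_distrib_left)
  also have "\<dots> = conv B f g p + c * conv B f h p"
    using conv_eq_sum[of "supp f" ?S f g B p] conv_eq_sum[of "supp f" ?S f h B p] assms by auto
  finally show "conv B f (\<lambda>p. g p + c * h p) p = conv B f g p + c * conv B f h p" .
qed

lemma conv_lincomb_left: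
  assumes "finite (supp f)" "finite (supp g)" "finite (supp h)"
  shows "conv B (\<lambda>p. f p + c * g p) h = (\<lambda>p. conv B f h p + c * conv B g h p)"
proof
  fix p
  let ?S = "supp f \<union> supp g"
  have fS: "finite ?S" using assms by auto
  have "conv B (\<lambda>p. f p + c * g p) h p =
      (\<Sum>q\<in>?S. \<Sum>r\<in>supp h. if pair_mult B q r = p then (f q + c * g q) * h r else 0)"
    by (rule conv_eq_sum) (use assms supp_lincomb in auto)
  also have "\<dots> = (\<Sum>q\<in>?S. \<Sum>r\<in>supp h. (if pair_mult B q r = p then f q * h r else 0) + c * (if pair_mult B q r = p then g q * h r else 0))"
    by (intro sum.cong refl) (auto simp: algebra_simps)
  also have "\<dots> = (\<Sum>q\<in>?S. \<Sum>r\<in>supp h. if pair_mult B q r = p then f q * h r else 0) + c * (\<Sum>q\<in>?S. \<Sum>r\<in>supp h. if pair_mult B q r = p then g q * h r else 0)"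
    by (simp add: sum.distrib sum_distrib_left)
  also have "\<dots> = conv B f h p + c * conv B g h p"
    using conv_eq_sum[of ?S "supp h" f h B p] conv_eq_sum[of ?S "supp h" g h B p] assms by auto
  finally show "conv B (\<lambda>p. f p + c * g p) h p = conv B f h p + c * conv B g h p" .
qed

lemma conv_zero_left: "conv B (\<lambda>_. 0) h = (\<lambda>_. 0)"
  unfolding conv_def by simp

lemma conv_zero_right: "conv B h (\<lambda>_. 0) = (\<lambda>_. 0)"
  unfolding conv_def by simp

lemma conv_delta_at: "conv B (delta_at q) (delta_at r) = delta_at (pair_mult B q r)"
proof
  fix p
  have "conv B (delta_at q) (delta_at r) p = (\<Sum>q'\<in>{q}. \<Sum>r'\<in>{r}. if pair_mult B q' r' = p then delta_at q q' * delta_at r r' else 0)"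
    by (rule conv_eq_sum) (auto simp: supp_delta_at)
  then show "conv B (delta_at q) (delta_at r) p = delta_at (pair_mult B q r) p" by (auto simp: delta_at_apply)
qed

lemma conv_delta_delta: "conv B (delta a b) (delta x y) = delta_at (pair_mult B (a, b) (x, y))"
  using conv_delta_at[of B "(a, b)" "(x, y)"] by simp

lemma conv_delta_at_diff:
  assumes "finite (supp f)"
  shows "conv B f (\<lambda>p. delta_at a p - delta_at b p) = (\<lambda>p. conv B f (delta_at a) p - conv B f (delta_at b) p)"
  using conv_lincomb_right[OF assms, of "delta_at a" "delta_at b" B "-1"] by (simp add: supp_delta_at)

lemma conv_delta_at_diff3:
  assumes "finite (supp f)"
  shows "conv B f (\<lambda>p. delta_at a p - delta_at b p - delta_at c p) =
    (\<lambda>p. conv B f (delta_at a) p - conv B f (delta_at b) p - conv B f (delta_at c) p)"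
proof -
  have "finite (supp (\<lambda>p. delta_at a p + (-1) * delta_at b p))"
    using supp_lincomb[of "delta_at a" "-1" "delta_at b"] by (simp add: supp_delta_at finite_subset)
  then show ?thesis
    using conv_lincomb_right[OF assms, of "\<lambda>p. delta_at a p + (-1) * delta_at b p" "delta_at c" B "-1"]
      conv_lincomb_right[OF assms, of "delta_at a" "delta_at b" B "-1"]
    by (simp add: supp_delta_at)
qed

lemma supp_conv:
  "supp (conv B f g) \<subseteq> (\<lambda>(q, r). pair_mult B q r) ` (supp f \<times> supp g)"
proof
  fix p assume "p \<in> supp (conv B f g)"
  then have "(\<Sum>(q, r)\<in>supp f \<times> supp g. if pair_mult B q r = p then f q * g r else 0) \<noteq> 0"
    unfolding supp_def conv_def pair_mult_def by simp
  then obtain x where "x \<in> supp f \<times> supp g" "(case x of (q, r) \<Rightarrow> if pair_mult B q r = p then f q * g r else 0) \<noteq> 0"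
    using sum.not_neutral_contains_not_neutral by blast
  then show "p \<in> (\<lambda>(q, r). pair_mult B q r) ` (supp f \<times> supp g)"
    by (cases x) (auto split: if_splits)
qed

context cring
begin

lemma pair_mult_carrier: "q \<in> carrier R \<times> carrier R \<Longrightarrow> r \<in> carrier R \<times> carrier R \<Longrightarrow> pair_mult R q r \<in> carrier R \<times> carrier R"
  unfolding pair_mult_def by auto

lemma pair_mult_comm: "q \<in> carrier R \<times> carrier R \<Longrightarrow> r \<in> carrier R \<times> carrier R \<Longrightarrow> pair_mult R q r = pair_mult R r q"
  unfolding pair_mult_def by (auto simp: m_comm)

lemma pair_mult_assoc: "q \<in> carrier R \<times> carrier R \<Longrightarrow> r \<in> carrier R \<times> carrier R \<Longrightarrow> s \<in> carrier R \<times> carrier R \<Longrightarrow>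
    pair_mult R (pair_mult R q r) s = pair_mult R q (pair_mult R r s)"
  unfolding pair_mult_def by (auto simp: m_assoc)

lemma fsums_conv:
  assumes "f \<in> fsums R" "g \<in> fsums R"
  shows "conv R f g \<in> fsums R"
proof -
  have "(\<lambda>(q, r). pair_mult R q r) ` (supp f \<times> supp g) \<subseteq> carrier R \<times> carrier R"
  proof (rule image_subsetI)
    fix x assume "x \<in> supp f \<times> supp g"
    then obtain q r where qr: "x = (q, r)" "q \<in> supp f" "r \<in> supp g" by auto
    then have "q \<in> carrier R \<times> carrier R" "r \<in> carrier R \<times> carrier R"
      using assms unfolding fsums_iff by auto
    then show "(\<lambda>(q, r). pair_mult R q r) x \<in> carrier R \<times> carrier R" using qr pair_mult_carrier by simp
  qed
  moreover have "finite ((\<lambda>(q, r). pair_mult R q r) ` (supp f \<times> supp g))" using assms unfolding fsums_iff by auto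
  ultimately show ?thesis unfolding fsums_iff using supp_conv[of R f g] by (meson finite_subset order_trans)
qed

lemma conv_commute:
  assumes "f \<in> fsums R" "g \<in> fsums R"
  shows "conv R f g = conv R g f"
proof
  fix p
  have "conv R f g p = (\<Sum>q\<in>supp f. \<Sum>r\<in>supp g. if pair_mult R q r = p then f q * g r else 0)"
    by (rule conv_eq_sum) (use assms in \<open>auto simp: fsums_iff\<close>)
  also have "\<dots> = (\<Sum>r\<in>supp g. \<Sum>q\<in>supp f. if pair_mult R q r = p then f q * g r else 0)"
    by (rule sum.swap)
  also have "\<dots> = (\<Sum>r\<in>supp g. \<Sum>q\<in>supp f. if pair_mult R r q = p then g r * f q else 0)"
    using assms unfolding fsums_iff by (intro sum.cong refl) (auto simp: pair_mult_comm subset_iff)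
  also have "\<dots> = conv R g f p"
    by (rule conv_eq_sum[symmetric]) (use assms in \<open>auto simp: fsums_iff\<close>)
  finally show "conv R f g p = conv R g f p" .
qed

lemma conv_delta_at_pair_mult:
  assumes "q \<in> carrier R \<times> carrier R" "r \<in> carrier R \<times> carrier R" "h \<in> fsums R"
  shows "conv R (delta_at (pair_mult R q r)) h = conv R (delta_at q) (conv R (delta_at r) h)"
  using assms(3)
proof (induction rule: fsums_induct)
  case zero
  then show ?case by (simp add: conv_zero_right)
next
  case (step h s c)
  have fh: "finite (supp h)" using step unfolding fsums_iff by auto
  have "conv R (delta_at (pair_mult R q r)) (\<lambda>p. h p + c * delta_at s p) = (\<lambda>p. conv R (delta_at (pair_mult R q r)) h p + c * delta_at (pair_mult R (pair_mult R q r) s) p)"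
    using conv_lincomb_right[of "delta_at (pair_mult R q r)" h "delta_at s" R c] fh by (simp add: supp_delta_at conv_delta_at)
  moreover have "conv R (delta_at q) (conv R (delta_at r) (\<lambda>p. h p + c * delta_at s p)) =
      (\<lambda>p. conv R (delta_at q) (conv R (delta_at r) h) p + c * delta_at (pair_mult R q (pair_mult R r s)) p)"
  proof -
    have "conv R (delta_at r) (\<lambda>p. h p + c * delta_at s p) = (\<lambda>p. conv R (delta_at r) h p + c * delta_at (pair_mult R r s) p)"
      using conv_lincomb_right[of "delta_at r" h "delta_at s" R c] fh by (simp add: supp_delta_at conv_delta_at)
    moreover have "finite (supp (conv R (delta_at r) h))"
      using fsums_conv[OF fsums_delta_at[OF assms(2)] step(1)] unfolding fsums_iff by auto
    ultimately show ?thesis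
      using conv_lincomb_right[of "delta_at q" "conv R (delta_at r) h" "delta_at (pair_mult R r s)" R c] by (simp add: supp_delta_at conv_delta_at)
  qed
  ultimately show ?case using step pair_mult_assoc assms by simp
qed

lemma conv_assoc_delta_at:
  assumes "q \<in> carrier R \<times> carrier R" "g \<in> fsums R" "h \<in> fsums R"
  shows "conv R (conv R (delta_at q) g) h = conv R (delta_at q) (conv R g h)"
  using assms(2)
proof (induction rule: fsums_induct)
  case zero
  then show ?case by (simp add: conv_zero_right conv_zero_left)
next
  case (step g r c)
  have fg: "finite (supp g)" "finite (supp h)" using step assms unfolding fsums_iff by auto
  have fc: "finite (supp (conv R (delta_at q) g))" "finite (supp (conv R g h))" "finite (supp (conv R (delta_at r) h))"
    using fsums_conv[OF fsums_delta_at[OF assms(1)] step(1)] fsums_conv[OF step(1) assms(3)]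
      fsums_conv[OF fsums_delta_at[OF step(2)] assms(3)]
    unfolding fsums_iff by auto
  have "conv R (delta_at q) (\<lambda>p. g p + c * delta_at r p) = (\<lambda>p. conv R (delta_at q) g p + c * delta_at (pair_mult R q r) p)"
    using conv_lincomb_right[of "delta_at q" g "delta_at r" R c] fg by (simp add: supp_delta_at conv_delta_at)
  then have L: "conv R (conv R (delta_at q) (\<lambda>p. g p + c * delta_at r p)) h =
      (\<lambda>p. conv R (conv R (delta_at q) g) h p + c * conv R (delta_at (pair_mult R q r)) h p)"
    using conv_lincomb_left[of "conv R (delta_at q) g" "delta_at (pair_mult R q r)" h R c] fc fg by (simp add: supp_delta_at)
  have "conv R (\<lambda>p. g p + c * delta_at r p) h = (\<lambda>p. conv R g h p + c * conv R (delta_at r) h p)"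
    using conv_lincomb_left[of g "delta_at r" h R c] fg by (simp add: supp_delta_at)
  then have Rr: "conv R (delta_at q) (conv R (\<lambda>p. g p + c * delta_at r p) h) =
     (\<lambda>p. conv R (delta_at q) (conv R g h) p + c * conv R (delta_at q) (conv R (delta_at r) h) p)"
    using conv_lincomb_right[of "delta_at q" "conv R g h" "conv R (delta_at r) h" R c] fc by (simp add: supp_delta_at)
  show ?case using L Rr step conv_delta_at_pair_mult[OF assms(1) step(2) assms(3)] by simp
qed

lemma conv_assoc:
  assumes "f \<in> fsums R" "g \<in> fsums R" "h \<in> fsums R"
  shows "conv R (conv R f g) h = conv R f (conv R g h)"
  using assms(1)
proof (induction rule: fsums_induct)
  case zero
  then show ?case by (simp add: conv_zero_left)
next
  case (step f q c)
  have fg: "finite (supp f)" "finite (supp g)" "finite (supp h)" using step assms unfolding fsums_iff by auto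
  have fc: "finite (supp (conv R f g))" "finite (supp (conv R (delta_at q) g))" "finite (supp (conv R g h))"
    using fsums_conv[OF step(1) assms(2)] fsums_conv[OF fsums_delta_at[OF step(2)] assms(2)]
      fsums_conv[OF assms(2,3)]
    unfolding fsums_iff by auto
  have "conv R (\<lambda>p. f p + c * delta_at q p) g = (\<lambda>p. conv R f g p + c * conv R (delta_at q) g p)"
    using conv_lincomb_left[of f "delta_at q" g R c] fg by (simp add: supp_delta_at)
  then have L: "conv R (conv R (\<lambda>p. f p + c * delta_at q p) g) h =
      (\<lambda>p. conv R (conv R f g) h p + c * conv R (conv R (delta_at q) g) h p)"
    using conv_lincomb_left[of "conv R f g" "conv R (delta_at q) g" h R c] fc fg by simp
  have Rr: "conv R (\<lambda>p. f p + c * delta_at q p) (conv R g h) =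
      (\<lambda>p. conv R f (conv R g h) p + c * conv R (delta_at q) (conv R g h) p)"
    using conv_lincomb_left[of f "delta_at q" "conv R g h" R c] fg fc by (simp add: supp_delta_at)
  show ?case using L Rr step conv_assoc_delta_at[OF step(2) assms(2,3)] by simp
qed

lemma conv_one_left:
  assumes "f \<in> fsums R"
  shows "conv R (delta \<one> \<one>) f = f"
  using assms
proof (induction rule: fsums_induct)
  case zero
  then show ?case by (simp add: conv_zero_right)
next
  case (step f q c)
  have fg: "finite (supp f)" using step unfolding fsums_iff by auto
  have "pair_mult R (\<one>, \<one>) q = q" using step(2) unfolding pair_mult_def by auto
  then have "conv R (delta_at (\<one>, \<one>)) (\<lambda>p. f p + c * delta_at q p) = (\<lambda>p. f p + c * delta_at q p)"
    using conv_lincomb_right[of "delta_at (\<one>, \<one>)" f "delta_at q" R c] fg step(3) conv_delta_at[of R "(\<one>, \<one>)" q]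
    by (simp add: supp_delta_at supp_delta)
  then show ?case by simp
qed

definition int_elem :: "int \<Rightarrow> 'a" where
  "int_elem c = add_pow R c \<one>"

lemma int_elem_closed[simp]: "int_elem c \<in> carrier R"
  unfolding int_elem_def by simp

lemma int_elem_add: "int_elem (c + d) = int_elem c \<oplus> int_elem d"
  unfolding int_elem_def by (simp add: add.int_pow_mult)

lemma int_elem_mult: "int_elem (c * d) = int_elem c \<otimes> int_elem d"
proof -
  have "int_elem c \<otimes> int_elem d = add_pow R d (int_elem c \<otimes> \<one>)"
    unfolding int_elem_def using add_pow_rdistr_int[of "add_pow R c \<one>" \<one> d] by simp
  also have "\<dots> = add_pow R d (add_pow R c \<one>)" unfolding int_elem_def by simp
  also have "\<dots> = add_pow R (c * d) \<one>" using add.int_pow_pow[of \<one> d c] by simp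
  finally show ?thesis unfolding int_elem_def by simp
qed

lemma int_elem_0: "int_elem 0 = \<zero>"
proof -
  have "int_elem 0 \<oplus> int_elem 0 = int_elem 0 \<oplus> \<zero>" using int_elem_add[of 0 0] by simp
  then show ?thesis by (rule add.l_cancel) auto
qed

lemma int_elem_1: "int_elem 1 = \<one>"
  unfolding int_elem_def by simp

lemma int_elem_m1: "int_elem (-1) = \<ominus> \<one>"
  unfolding int_elem_def by (simp add: add.int_pow_neg)

definition mult_sum :: "('a \<times> 'a \<Rightarrow> int) \<Rightarrow> 'a" where
  "mult_sum f = (\<Oplus>q\<in>supp f. int_elem (f q) \<otimes> (fst q \<otimes> snd q))"

lemma mult_sum_term_funcset: "S \<subseteq> carrier R \<times> carrier R \<Longrightarrow> (\<lambda>q. int_elem (f q) \<otimes> (fst q \<otimes> snd q)) \<in> S \<rightarrow> carrier R"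
  by (auto simp: subset_iff)

lemma mult_sum_eq_finsum:
  assumes S: "finite S" "supp f \<subseteq> S" "S \<subseteq> carrier R \<times> carrier R"
  shows "mult_sum f = (\<Oplus>q\<in>S. int_elem (f q) \<otimes> (fst q \<otimes> snd q))"
  unfolding mult_sum_def
  by (rule add.finprod_mono_neutral_cong_left) (use S in \<open>auto simp: supp_def int_elem_0 subset_iff\<close>)

lemma mult_sum_closed: "f \<in> fsums R \<Longrightarrow> mult_sum f \<in> carrier R"
  unfolding mult_sum_def fsums_iff by (intro finsum_closed mult_sum_term_funcset) auto

lemma mult_sum_lincomb:
  assumes f: "f \<in> fsums R" and g: "g \<in> fsums R"
  shows "mult_sum (\<lambda>p. f p + c * g p) = mult_sum f \<oplus> int_elem c \<otimes> mult_sum g"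
proof -
  let ?S = "supp f \<union> supp g"
  have S: "finite ?S" "?S \<subseteq> carrier R \<times> carrier R" using f g unfolding fsums_iff by auto
  have "mult_sum (\<lambda>p. f p + c * g p) = (\<Oplus>q\<in>?S. int_elem (f q + c * g q) \<otimes> (fst q \<otimes> snd q))"
    by (rule mult_sum_eq_finsum[OF S(1) supp_lincomb S(2)])
  also have "\<dots> = (\<Oplus>q\<in>?S. int_elem (f q) \<otimes> (fst q \<otimes> snd q) \<oplus> int_elem c \<otimes> (int_elem (g q) \<otimes> (fst q \<otimes> snd q)))"
  proof (rule finsum_cong')
    show "(\<lambda>q. int_elem (f q) \<otimes> (fst q \<otimes> snd q) \<oplus> int_elem c \<otimes> (int_elem (g q) \<otimes> (fst q \<otimes> snd q))) \<in> ?S \<rightarrow> carrier R"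
      using S(2) by (auto simp: subset_iff)
    fix q assume "q \<in> ?S"
    then have "fst q \<in> carrier R" "snd q \<in> carrier R" using S(2) by auto
    then show "int_elem (f q + c * g q) \<otimes> (fst q \<otimes> snd q) = int_elem (f q) \<otimes> (fst q \<otimes> snd q) \<oplus> int_elem c \<otimes> (int_elem (g q) \<otimes> (fst q \<otimes> snd q))"
      by (simp add: int_elem_add int_elem_mult l_distr m_assoc)
  qed simp
  also have "\<dots> = (\<Oplus>q\<in>?S. int_elem (f q) \<otimes> (fst q \<otimes> snd q)) \<oplus> (\<Oplus>q\<in>?S. int_elem c \<otimes> (int_elem (g q) \<otimes> (fst q \<otimes> snd q)))"
    by (rule finsum_addf) (use S(2) in \<open>auto simp: subset_iff\<close>)
  also have "(\<Oplus>q\<in>?S. int_elem c \<otimes> (int_elem (g q) \<otimes> (fst q \<otimes> snd q))) = int_elem c \<otimes> (\<Oplus>q\<in>?S. int_elem (g q) \<otimes> (fst q \<otimes> snd q))"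
    by (rule finsum_rdistr[symmetric]) (use S in \<open>auto simp: subset_iff\<close>)
  also have "(\<Oplus>q\<in>?S. int_elem (f q) \<otimes> (fst q \<otimes> snd q)) = mult_sum f"
    by (rule mult_sum_eq_finsum[symmetric]) (use f S in auto)
  also have "(\<Oplus>q\<in>?S. int_elem (g q) \<otimes> (fst q \<otimes> snd q)) = mult_sum g"
    by (rule mult_sum_eq_finsum[symmetric]) (use g S in auto)
  finally show ?thesis .
qed

lemma mult_sum_zero: "mult_sum (\<lambda>_. 0) = \<zero>"
  unfolding mult_sum_def supp_zero by simp

lemma mult_sum_delta_at:
  assumes q: "q \<in> carrier R \<times> carrier R"
  shows "mult_sum (delta_at q) = fst q \<otimes> snd q"
proof -
  have "mult_sum (delta_at q) = int_elem (delta_at q q) \<otimes> (fst q \<otimes> snd q) \<oplus> (\<Oplus>q\<in>{}. int_elem (delta_at q q) \<otimes> (fst q \<otimes> snd q))"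
    unfolding mult_sum_def supp_delta_at using q by (subst finsum_insert) auto
  moreover have "fst q \<in> carrier R" "snd q \<in> carrier R" using q by auto
  ultimately show ?thesis by (simp add: delta_at_apply int_elem_1)
qed

lemma mult_sum_delta: "x \<in> carrier R \<Longrightarrow> y \<in> carrier R \<Longrightarrow> mult_sum (delta x y) = x \<otimes> y"
  using mult_sum_delta_at[of "(x, y)"] by simp

lemma mult_sum_diff:
  assumes f: "f \<in> fsums R" and g: "g \<in> fsums R"
  shows "mult_sum (\<lambda>p. f p - g p) = mult_sum f \<ominus> mult_sum g"
proof -
  have "mult_sum (\<lambda>p. f p + (-1) * g p) = mult_sum f \<oplus> int_elem (-1) \<otimes> mult_sum g" by (rule mult_sum_lincomb[OF f g])
  then show ?thesis using mult_sum_closed[OF f] mult_sum_closed[OF g]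
    by (simp add: int_elem_m1 minus_eq l_minus)
qed

lemma mult_sum_conv_delta_at:
  assumes q: "q \<in> carrier R \<times> carrier R" and g: "g \<in> fsums R"
  shows "mult_sum (conv R (delta_at q) g) = (fst q \<otimes> snd q) \<otimes> mult_sum g"
  using g
proof (induction rule: fsums_induct)
  case zero
  have "fst q \<in> carrier R" "snd q \<in> carrier R" using q by auto
  then show ?case by (simp add: conv_zero_right mult_sum_zero)
next
  case (step g r c)
  have fin: "finite (supp g)" using step unfolding fsums_iff by auto
  have e: "conv R (delta_at q) (\<lambda>p. g p + c * delta_at r p) = (\<lambda>p. conv R (delta_at q) g p + c * delta_at (pair_mult R q r) p)"
    using conv_lincomb_right[of "delta_at q" g "delta_at r" R c] fin by (simp add: supp_delta_at conv_delta_at)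
  have m: "pair_mult R q r \<in> carrier R \<times> carrier R" using pair_mult_carrier q step by auto
  have "mult_sum (conv R (delta_at q) (\<lambda>p. g p + c * delta_at r p)) = mult_sum (conv R (delta_at q) g) \<oplus> int_elem c \<otimes> mult_sum (delta_at (pair_mult R q r))"
    unfolding e by (rule mult_sum_lincomb[OF fsums_conv[OF fsums_delta_at[OF q] step(1)] fsums_delta_at[OF m]])
  also have "\<dots> = (fst q \<otimes> snd q) \<otimes> mult_sum g \<oplus> int_elem c \<otimes> ((fst q \<otimes> fst r) \<otimes> (snd q \<otimes> snd r))"
    using step mult_sum_delta_at[OF m] unfolding pair_mult_def by simp
  also have "\<dots> = (fst q \<otimes> snd q) \<otimes> (mult_sum g \<oplus> int_elem c \<otimes> (fst r \<otimes> snd r))"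
  proof -
    have c: "fst q \<in> carrier R" "snd q \<in> carrier R" "fst r \<in> carrier R" "snd r \<in> carrier R"
      "mult_sum g \<in> carrier R" "int_elem c \<in> carrier R"
      using q step mult_sum_closed by auto
    show ?thesis using c by algebra
  qed
  also have "\<dots> = (fst q \<otimes> snd q) \<otimes> mult_sum (\<lambda>p. g p + c * delta_at r p)"
    using mult_sum_lincomb[OF step(1) fsums_delta_at[OF step(2)]] mult_sum_delta_at[OF step(2)] by simp
  finally show ?case .
qed

lemma mult_sum_conv:
  assumes f: "f \<in> fsums R" and g: "g \<in> fsums R"
  shows "mult_sum (conv R f g) = mult_sum f \<otimes> mult_sum g"
  using f
proof (induction rule: fsums_induct)
  case zero
  then show ?case using mult_sum_closed[OF g] by (simp add: conv_zero_left mult_sum_zero)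
next
  case (step f q c)
  have fin: "finite (supp f)" "finite (supp g)" using step g unfolding fsums_iff by auto
  have e: "conv R (\<lambda>p. f p + c * delta_at q p) g = (\<lambda>p. conv R f g p + c * conv R (delta_at q) g p)"
    using conv_lincomb_left[of f "delta_at q" g R c] fin by (simp add: supp_delta_at)
  have "mult_sum (conv R (\<lambda>p. f p + c * delta_at q p) g) = mult_sum (conv R f g) \<oplus> int_elem c \<otimes> mult_sum (conv R (delta_at q) g)"
    unfolding e by (rule mult_sum_lincomb[OF fsums_conv[OF step(1) g] fsums_conv[OF fsums_delta_at[OF step(2)] g]])
  also have "\<dots> = mult_sum f \<otimes> mult_sum g \<oplus> int_elem c \<otimes> ((fst q \<otimes> snd q) \<otimes> mult_sum g)"
    using step mult_sum_conv_delta_at[OF step(2) g] by simp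
  also have "\<dots> = (mult_sum f \<oplus> int_elem c \<otimes> (fst q \<otimes> snd q)) \<otimes> mult_sum g"
  proof -
    have c: "fst q \<in> carrier R" "snd q \<in> carrier R" "mult_sum f \<in> carrier R"
      "mult_sum g \<in> carrier R" "int_elem c \<in> carrier R"
      using step mult_sum_closed g by auto
    show ?thesis using c by algebra
  qed
  also have "\<dots> = mult_sum (\<lambda>p. f p + c * delta_at q p) \<otimes> mult_sum g"
    using mult_sum_lincomb[OF step(1) fsums_delta_at[OF step(2)]] mult_sum_delta_at[OF step(2)] by simp
  finally show ?case .
qed

lemma mult_sum_delta_diff:
  assumes "x \<in> carrier R" "y \<in> carrier R" "x' \<in> carrier R" "y' \<in> carrier R"
  shows "mult_sum (\<lambda>p. delta x y p - delta x' y' p) = x \<otimes> y \<ominus> x' \<otimes> y'"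
  using mult_sum_diff[OF fsums_delta fsums_delta] mult_sum_delta assms by simp

lemma mult_sum_delta_diff3:
  assumes "x \<in> carrier R" "y \<in> carrier R" "x' \<in> carrier R" "y' \<in> carrier R"
    "x'' \<in> carrier R" "y'' \<in> carrier R"
  shows "mult_sum (\<lambda>p. delta x y p - delta x' y' p - delta x'' y'' p) = x \<otimes> y \<ominus> x' \<otimes> y' \<ominus> x'' \<otimes> y''"
  using mult_sum_diff[OF fsums_diff[OF fsums_delta fsums_delta] fsums_delta] mult_sum_delta_diff mult_sum_delta
    assms by simp

end

section \<open>The ring \<open>B \<otimes>\<^sub>A B\<close>\<close>

locale tensor_square = cring R for R (structure) +
  fixes A assumes A_subset: "A \<subseteq> carrier R"
begin

abbreviation "Rel \<equiv> tens_rels R A"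

lemma tens_rels_cong:
  assumes "f \<in> Rel" "\<And>p. g p = f p"
  shows "g \<in> Rel"
  using assms(1) ext[of g f, OF assms(2)] by simp

lemma tens_rels_fsums: "f \<in> Rel \<Longrightarrow> f \<in> fsums R"
proof (induction rule: tens_rels.induct)
  case zero
  then show ?case by (rule fsums_zero)
next
  case (addl x x' y)
  then have "delta (x \<oplus> x') y \<in> fsums R" "delta x y \<in> fsums R" "delta x' y \<in> fsums R"
    by (auto intro!: fsums_delta)
  from fsums_diff[OF fsums_diff[OF this(1,2)] this(3)] show ?case by simp
next
  case (addr x y y')
  then have "delta x (y \<oplus> y') \<in> fsums R" "delta x y \<in> fsums R" "delta x y' \<in> fsums R"
    by (auto intro!: fsums_delta)
  from fsums_diff[OF fsums_diff[OF this(1,2)] this(3)] show ?case by simp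
next
  case (bal a x y)
  then have "delta (a \<otimes> x) y \<in> fsums R" "delta x (a \<otimes> y) \<in> fsums R"
    using A_subset by (auto intro!: fsums_delta)
  from fsums_diff[OF this(1,2)] show ?case by simp
next
  case (diff f g)
  from fsums_diff[OF diff(3,4)] show ?case by simp
qed

lemma tens_rels_uminus:
  assumes "f \<in> Rel" shows "(\<lambda>p. - f p) \<in> Rel"
  using tens_rels.diff[OF tens_rels.zero assms] by (rule tens_rels_cong) simp

lemma tens_rels_add:
  assumes "f \<in> Rel" "g \<in> Rel" shows "(\<lambda>p. f p + g p) \<in> Rel"
  using tens_rels.diff[OF assms(1) tens_rels_uminus[OF assms(2)]] by (rule tens_rels_cong) simp

lemma tens_rels_smult_nat: "f \<in> Rel \<Longrightarrow> (\<lambda>p. int n * f p) \<in> Rel"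
proof (induction n)
  case 0
  show ?case using tens_rels.zero by (rule tens_rels_cong) simp
next
  case (Suc n)
  then have "(\<lambda>p. int n * f p + f p) \<in> Rel" using tens_rels_add by auto
  then show ?case by (rule tens_rels_cong) (simp add: algebra_simps)
qed

lemma tens_rels_smult:
  assumes f: "f \<in> Rel" shows "(\<lambda>p. c * f p) \<in> Rel"
proof (cases "c \<ge> 0")
  case True
  then show ?thesis using tens_rels_smult_nat[OF f, of "nat c"] by simp
next
  case False
  then show ?thesis using tens_rels_uminus[OF tens_rels_smult_nat[OF f, of "nat (- c)"]] by simp
qed

lemma tens_rels_lincomb: "f \<in> Rel \<Longrightarrow> g \<in> Rel \<Longrightarrow> (\<lambda>p. f p + c * g p) \<in> Rel"
  using tens_rels_add tens_rels_smult by blast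

lemma conv_delta_at_addl:
  assumes q: "q \<in> carrier R \<times> carrier R" and xy: "x \<in> carrier R" "x' \<in> carrier R" "y \<in> carrier R"
  shows "conv R (delta_at q) (\<lambda>p. delta (x \<oplus> x') y p - delta x y p - delta x' y p) \<in> Rel"
proof -
  have "pair_mult R q (x \<oplus> x', y) = (fst q \<otimes> x \<oplus> fst q \<otimes> x', snd q \<otimes> y)"
    using q xy unfolding pair_mult_def by (auto simp: r_distr)
  moreover have "(\<lambda>p. delta (fst q \<otimes> x \<oplus> fst q \<otimes> x') (snd q \<otimes> y) p - delta (fst q \<otimes> x) (snd q \<otimes> y) p
      - delta (fst q \<otimes> x') (snd q \<otimes> y) p) \<in> Rel"
    using q xy by (intro tens_rels.addl) auto
  ultimately show ?thesis
    using conv_delta_at_diff3[of "delta_at q" R "(x \<oplus> x', y)" "(x, y)" "(x', y)"]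
    by (simp add: supp_delta_at conv_delta_delta pair_mult_def)
qed

lemma conv_delta_at_addr:
  assumes q: "q \<in> carrier R \<times> carrier R" and xy: "x \<in> carrier R" "y \<in> carrier R" "y' \<in> carrier R"
  shows "conv R (delta_at q) (\<lambda>p. delta x (y \<oplus> y') p - delta x y p - delta x y' p) \<in> Rel"
proof -
  have "pair_mult R q (x, y \<oplus> y') = (fst q \<otimes> x, snd q \<otimes> y \<oplus> snd q \<otimes> y')"
    using q xy unfolding pair_mult_def by (auto simp: r_distr)
  moreover have "(\<lambda>p. delta (fst q \<otimes> x) (snd q \<otimes> y \<oplus> snd q \<otimes> y') p - delta (fst q \<otimes> x) (snd q \<otimes> y) p
      - delta (fst q \<otimes> x) (snd q \<otimes> y') p) \<in> Rel"
    using q xy by (intro tens_rels.addr) auto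
  ultimately show ?thesis
    using conv_delta_at_diff3[of "delta_at q" R "(x, y \<oplus> y')" "(x, y)" "(x, y')"]
    by (simp add: supp_delta_at conv_delta_delta pair_mult_def)
qed

lemma conv_delta_at_bal:
  assumes q: "q \<in> carrier R \<times> carrier R" and a: "a \<in> A" and xy: "x \<in> carrier R" "y \<in> carrier R"
  shows "conv R (delta_at q) (\<lambda>p. delta (a \<otimes> x) y p - delta x (a \<otimes> y) p) \<in> Rel"
proof -
  have "pair_mult R q (a \<otimes> x, y) = (a \<otimes> (fst q \<otimes> x), snd q \<otimes> y)"
    "pair_mult R q (x, a \<otimes> y) = (fst q \<otimes> x, a \<otimes> (snd q \<otimes> y))"
    using q a xy A_subset unfolding pair_mult_def by (auto simp: m_lcomm)
  moreover have "(\<lambda>p. delta (a \<otimes> (fst q \<otimes> x)) (snd q \<otimes> y) p - delta (fst q \<otimes> x) (a \<otimes> (snd q \<otimes> y)) p) \<in> Rel"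
    using q a xy by (intro tens_rels.bal) auto
  ultimately show ?thesis
    using conv_delta_at_diff[of "delta_at q" R "(a \<otimes> x, y)" "(x, a \<otimes> y)"]
    by (simp add: supp_delta_at conv_delta_delta)
qed

lemma conv_delta_at_tens_rels:
  assumes q: "q \<in> carrier R \<times> carrier R" and g: "g \<in> Rel"
  shows "conv R (delta_at q) g \<in> Rel"
  using g
proof (induction rule: tens_rels.induct)
  case zero
  then show ?case by (simp add: conv_zero_right tens_rels.zero)
next
  case (diff f g)
  have "finite (supp f)" "finite (supp g)"
    using tens_rels_fsums[OF diff(1)] tens_rels_fsums[OF diff(2)] unfolding fsums_iff by auto
  then have "conv R (delta_at q) (\<lambda>p. f p + (-1) * g p) =
      (\<lambda>p. conv R (delta_at q) f p + (-1) * conv R (delta_at q) g p)"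
    using conv_lincomb_right[of "delta_at q" f g R "-1"] by (simp add: supp_delta_at)
  then show ?case using diff tens_rels.diff by simp
qed (use q conv_delta_at_addl conv_delta_at_addr conv_delta_at_bal in auto)

lemma conv_tens_rels_right:
  assumes f: "f \<in> fsums R" and g: "g \<in> Rel"
  shows "conv R f g \<in> Rel"
  using f
proof (induction rule: fsums_induct)
  case zero
  then show ?case by (simp add: conv_zero_left tens_rels.zero)
next
  case (step f q c)
  have "finite (supp f)" "finite (supp g)" using step tens_rels_fsums[OF g] unfolding fsums_iff by auto
  then have "conv R (\<lambda>p. f p + c * delta_at q p) g = (\<lambda>p. conv R f g p + c * conv R (delta_at q) g p)"
    using conv_lincomb_left[of f "delta_at q" g R c] by (simp add: supp_delta_at)
  then show ?case using step conv_delta_at_tens_rels[OF step(2) g] tens_rels_lincomb by simp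
qed

lemma conv_tens_rels_left:
  assumes f: "f \<in> Rel" and g: "g \<in> fsums R"
  shows "conv R f g \<in> Rel"
  using conv_tens_rels_right[OF g f] conv_commute[OF tens_rels_fsums[OF f] g] by simp

lemma conv_tens_rels_cong:
  assumes fsums: "f \<in> fsums R" "f' \<in> fsums R" "g \<in> fsums R" "g' \<in> fsums R"
    and rels: "(\<lambda>p. f p - f' p) \<in> Rel" "(\<lambda>p. g p - g' p) \<in> Rel"
  shows "(\<lambda>p. conv R f g p - conv R f' g' p) \<in> Rel"
proof -
  have fin: "finite (supp f)" "finite (supp f')" "finite (supp g)" "finite (supp g')"
    using fsums unfolding fsums_iff by auto
  have "conv R (\<lambda>p. f p + (-1) * f' p) g \<in> Rel"
    using conv_tens_rels_left[OF _ fsums(3)] rels(1) by simp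
  moreover have "conv R f' (\<lambda>p. g p + (-1) * g' p) \<in> Rel"
    using conv_tens_rels_right[OF fsums(2)] rels(2) by simp
  ultimately have "(\<lambda>p. conv R (\<lambda>p. f p + (-1) * f' p) g p + conv R f' (\<lambda>p. g p + (-1) * g' p) p) \<in> Rel"
    by (rule tens_rels_add)
  then show ?thesis
    unfolding conv_lincomb_left[OF fin(1,2,3)] conv_lincomb_right[OF fin(2,3,4)]
    by (rule tens_rels_cong) simp
qed

abbreviation "cls \<equiv> tens_class R A"

lemma tens_class_self: "f \<in> fsums R \<Longrightarrow> f \<in> cls f"
  unfolding tens_class_def using tens_rels.zero by simp

lemma tens_class_eq_iff:
  assumes f: "f \<in> fsums R" and g: "g \<in> fsums R"
  shows "cls f = cls g \<longleftrightarrow> (\<lambda>p. f p - g p) \<in> Rel"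
proof
  assume "cls f = cls g"
  then have "g \<in> cls f" using tens_class_self[OF g] by simp
  then show "(\<lambda>p. f p - g p) \<in> Rel" unfolding tens_class_def by simp
next
  assume fg: "(\<lambda>p. f p - g p) \<in> Rel"
  have "(\<lambda>p. f p - h p) \<in> Rel \<longleftrightarrow> (\<lambda>p. g p - h p) \<in> Rel" for h
  proof
    assume "(\<lambda>p. f p - h p) \<in> Rel"
    from tens_rels.diff[OF this fg] show "(\<lambda>p. g p - h p) \<in> Rel" by (rule tens_rels_cong) simp
  next
    assume "(\<lambda>p. g p - h p) \<in> Rel"
    from tens_rels_add[OF this fg] show "(\<lambda>p. f p - h p) \<in> Rel" by (rule tens_rels_cong) simp
  qed
  then show "cls f = cls g" unfolding tens_class_def by blast
qed

abbreviation "T \<equiv> tensor R A"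

lemma tensor_carrier: "carrier T = cls ` fsums R"
  unfolding tensor_def by simp

lemma tensor_one: "\<one>\<^bsub>T\<^esub> = cls (delta \<one> \<one>)"
  unfolding tensor_def by simp

lemma tensor_zero: "\<zero>\<^bsub>T\<^esub> = cls (\<lambda>_. 0)"
  unfolding tensor_def by simp

lemma tensor_add:
  assumes f: "f \<in> fsums R" and g: "g \<in> fsums R"
  shows "cls f \<oplus>\<^bsub>T\<^esub> cls g = cls (\<lambda>p. f p + g p)"
proof -
  have "{h. \<exists>f'\<in>cls f. \<exists>g'\<in>cls g. h = (\<lambda>p. f' p + g' p)} = cls (\<lambda>p. f p + g p)"
  proof (intro equalityI subsetI)
    fix h assume "h \<in> {h. \<exists>f'\<in>cls f. \<exists>g'\<in>cls g. h = (\<lambda>p. f' p + g' p)}"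
    then obtain f' g' where fg: "f' \<in> cls f" "g' \<in> cls g" "h = (\<lambda>p. f' p + g' p)" by auto
    then have "f' \<in> fsums R" "g' \<in> fsums R" "(\<lambda>p. f p - f' p) \<in> Rel" "(\<lambda>p. g p - g' p) \<in> Rel"
      unfolding tens_class_def by auto
    then have "(\<lambda>p. f p + g p - h p) \<in> Rel" "h \<in> fsums R"
      using tens_rels_cong[OF tens_rels_add, of "\<lambda>p. f p - f' p" "\<lambda>p. g p - g' p"] fsums_add fg(3)
      by auto
    then show "h \<in> cls (\<lambda>p. f p + g p)" unfolding tens_class_def by simp
  next
    fix h assume "h \<in> cls (\<lambda>p. f p + g p)"
    then have h: "h \<in> fsums R" "(\<lambda>p. f p + g p - h p) \<in> Rel" unfolding tens_class_def by auto
    have "(\<lambda>p. f p - (h p - g p)) \<in> Rel" using h(2) by (rule tens_rels_cong) simp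
    then have "(\<lambda>p. h p - g p) \<in> cls f" unfolding tens_class_def using fsums_diff[OF h(1) g] by simp
    then show "h \<in> {h. \<exists>f'\<in>cls f. \<exists>g'\<in>cls g. h = (\<lambda>p. f' p + g' p)}"
      unfolding mem_Collect_eq using tens_class_self[OF g]
      by (intro bexI[of _ "\<lambda>p. h p - g p"] bexI[of _ g]) simp_all
  qed
  then show ?thesis unfolding tensor_def by simp
qed

lemma tensor_mult:
  assumes f: "f \<in> fsums R" and g: "g \<in> fsums R"
  shows "cls f \<otimes>\<^bsub>T\<^esub> cls g = cls (conv R f g)"
proof -
  have "{h \<in> fsums R. \<exists>f'\<in>cls f. \<exists>g'\<in>cls g. (\<lambda>p. h p - conv R f' g' p) \<in> Rel} = cls (conv R f g)"
  proof (intro equalityI subsetI)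
    fix h assume "h \<in> {h \<in> fsums R. \<exists>f'\<in>cls f. \<exists>g'\<in>cls g. (\<lambda>p. h p - conv R f' g' p) \<in> Rel}"
    then obtain f' g' where h: "h \<in> fsums R" "f' \<in> cls f" "g' \<in> cls g"
      "(\<lambda>p. h p - conv R f' g' p) \<in> Rel"
      by auto
    then have "(\<lambda>p. conv R f g p - conv R f' g' p) \<in> Rel"
      using conv_tens_rels_cong[OF f _ g] unfolding tens_class_def by auto
    from tens_rels.diff[OF this h(4)] have "(\<lambda>p. conv R f g p - h p) \<in> Rel"
      by (rule tens_rels_cong) simp
    then show "h \<in> cls (conv R f g)" unfolding tens_class_def using h(1) by simp
  next
    fix h assume "h \<in> cls (conv R f g)"
    then have h: "h \<in> fsums R" "(\<lambda>p. conv R f g p - h p) \<in> Rel" unfolding tens_class_def by auto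
    have "(\<lambda>p. h p - conv R f g p) \<in> Rel" using tens_rels_uminus[OF h(2)] by (rule tens_rels_cong) simp
    then show "h \<in> {h \<in> fsums R. \<exists>f'\<in>cls f. \<exists>g'\<in>cls g. (\<lambda>p. h p - conv R f' g' p) \<in> Rel}"
      using h(1) tens_class_self[OF f] tens_class_self[OF g] by blast
  qed
  then show ?thesis unfolding tensor_def by simp
qed

lemma tens_class_in_carrier: "f \<in> fsums R \<Longrightarrow> cls f \<in> carrier T"
  unfolding tensor_carrier by simp

lemma tensor_carrier_cases:
  assumes "t \<in> carrier T"
  obtains f where "f \<in> fsums R" "t = cls f"
  using assms unfolding tensor_carrier by auto

lemma tensor_abelian_group: "abelian_group T"
proof (rule abelian_groupI)
  fix x y assume "x \<in> carrier T" "y \<in> carrier T"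
  then obtain f g where fg: "f \<in> fsums R" "x = cls f" "g \<in> fsums R" "y = cls g"
    by (metis tensor_carrier_cases)
  show "x \<oplus>\<^bsub>T\<^esub> y \<in> carrier T" using fg tensor_add tens_class_in_carrier[OF fsums_add[OF fg(1,3)]] by simp
  show "x \<oplus>\<^bsub>T\<^esub> y = y \<oplus>\<^bsub>T\<^esub> x" using fg tensor_add by (simp add: add.commute)
next
  show "\<zero>\<^bsub>T\<^esub> \<in> carrier T" using tensor_zero tens_class_in_carrier[OF fsums_zero] by simp
next
  fix x y z assume "x \<in> carrier T" "y \<in> carrier T" "z \<in> carrier T"
  then obtain f g h where fg: "f \<in> fsums R" "x = cls f" "g \<in> fsums R" "y = cls g" "h \<in> fsums R" "z = cls h"
    by (metis tensor_carrier_cases)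
  show "x \<oplus>\<^bsub>T\<^esub> y \<oplus>\<^bsub>T\<^esub> z = x \<oplus>\<^bsub>T\<^esub> (y \<oplus>\<^bsub>T\<^esub> z)"
    using fg tensor_add fsums_add[OF fg(1,3)] fsums_add[OF fg(3,5)] by (simp add: add.assoc)
next
  fix x assume "x \<in> carrier T"
  then obtain f where f: "f \<in> fsums R" "x = cls f" by (metis tensor_carrier_cases)
  show "\<zero>\<^bsub>T\<^esub> \<oplus>\<^bsub>T\<^esub> x = x" using f tensor_add[OF fsums_zero f(1)] tensor_zero by simp
  have "cls (\<lambda>p. - f p) \<oplus>\<^bsub>T\<^esub> x = \<zero>\<^bsub>T\<^esub>" using f tensor_add[OF fsums_uminus[OF f(1)] f(1)] tensor_zero by simp
  then show "\<exists>y\<in>carrier T. y \<oplus>\<^bsub>T\<^esub> x = \<zero>\<^bsub>T\<^esub>" using tens_class_in_carrier[OF fsums_uminus[OF f(1)]] by blast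
qed

lemma tensor_comm_monoid: "comm_monoid T"
proof (rule comm_monoidI)
  fix x y assume "x \<in> carrier T" "y \<in> carrier T"
  then obtain f g where fg: "f \<in> fsums R" "x = cls f" "g \<in> fsums R" "y = cls g"
    by (metis tensor_carrier_cases)
  show "x \<otimes>\<^bsub>T\<^esub> y \<in> carrier T" using fg tensor_mult tens_class_in_carrier[OF fsums_conv[OF fg(1,3)]] by simp
  show "x \<otimes>\<^bsub>T\<^esub> y = y \<otimes>\<^bsub>T\<^esub> x" using fg tensor_mult conv_commute[OF fg(1,3)] by simp
next
  show "\<one>\<^bsub>T\<^esub> \<in> carrier T" using tensor_one tens_class_in_carrier[OF fsums_delta[OF one_closed one_closed]] by simp
next
  fix x y z assume "x \<in> carrier T" "y \<in> carrier T" "z \<in> carrier T"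
  then obtain f g h where fg: "f \<in> fsums R" "x = cls f" "g \<in> fsums R" "y = cls g" "h \<in> fsums R" "z = cls h"
    by (metis tensor_carrier_cases)
  show "x \<otimes>\<^bsub>T\<^esub> y \<otimes>\<^bsub>T\<^esub> z = x \<otimes>\<^bsub>T\<^esub> (y \<otimes>\<^bsub>T\<^esub> z)"
    using fg tensor_mult fsums_conv[OF fg(1,3)] fsums_conv[OF fg(3,5)] conv_assoc[OF fg(1,3,5)] by simp
next
  fix x assume "x \<in> carrier T"
  then obtain f where f: "f \<in> fsums R" "x = cls f" by (metis tensor_carrier_cases)
  show "\<one>\<^bsub>T\<^esub> \<otimes>\<^bsub>T\<^esub> x = x"
    using f tensor_mult[OF fsums_delta[OF one_closed one_closed] f(1)] tensor_one conv_one_left[OF f(1)] by simp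
qed

lemma cring_tensor: "cring T"
proof (rule cringI[OF tensor_abelian_group tensor_comm_monoid])
  fix x y z assume "x \<in> carrier T" "y \<in> carrier T" "z \<in> carrier T"
  then obtain f g h where fg: "f \<in> fsums R" "x = cls f" "g \<in> fsums R" "y = cls g" "h \<in> fsums R" "z = cls h"
    by (metis tensor_carrier_cases)
  have fin: "finite (supp f)" "finite (supp g)" "finite (supp h)" using fg unfolding fsums_iff by auto
  have "conv R (\<lambda>p. f p + 1 * g p) h = (\<lambda>p. conv R f h p + 1 * conv R g h p)"
    by (rule conv_lincomb_left[OF fin])
  then have e: "conv R (\<lambda>p. f p + g p) h = (\<lambda>p. conv R f h p + conv R g h p)" by simp
  show "(x \<oplus>\<^bsub>T\<^esub> y) \<otimes>\<^bsub>T\<^esub> z = x \<otimes>\<^bsub>T\<^esub> z \<oplus>\<^bsub>T\<^esub> y \<otimes>\<^bsub>T\<^esub> z"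
    using fg tensor_add tensor_mult fsums_add[OF fg(1,3)] fsums_conv[OF fg(1,5)] fsums_conv[OF fg(3,5)] e by simp
qed

lemma tens_incl_ring_hom: "tens_incl R A \<in> ring_hom R T"
proof (rule ring_hom_memI)
  fix x assume "x \<in> carrier R"
  then show "tens_incl R A x \<in> carrier T" unfolding tens_incl_def by (intro tens_class_in_carrier fsums_delta) auto
next
  fix x y assume xy: "x \<in> carrier R" "y \<in> carrier R"
  have "tens_incl R A x \<otimes>\<^bsub>T\<^esub> tens_incl R A y = cls (conv R (delta x \<one>) (delta y \<one>))"
    unfolding tens_incl_def
    using tensor_mult[OF fsums_delta[OF xy(1) one_closed] fsums_delta[OF xy(2) one_closed]] .
  also have "\<dots> = cls (delta (x \<otimes> y) \<one>)" using conv_delta_delta[of R x \<one> y \<one>] unfolding pair_mult_def by simp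
  finally show "tens_incl R A (x \<otimes> y) = tens_incl R A x \<otimes>\<^bsub>T\<^esub> tens_incl R A y"
    unfolding tens_incl_def by simp
  have "tens_incl R A x \<oplus>\<^bsub>T\<^esub> tens_incl R A y = cls (\<lambda>p. delta x \<one> p + delta y \<one> p)"
    unfolding tens_incl_def
    using tensor_add[OF fsums_delta[OF xy(1) one_closed] fsums_delta[OF xy(2) one_closed]] .
  also have "\<dots> = cls (delta (x \<oplus> y) \<one>)"
  proof -
    have "(\<lambda>p. delta (x \<oplus> y) \<one> p - delta x \<one> p - delta y \<one> p) \<in> Rel"
      using xy by (intro tens_rels.addl) auto
    then have "(\<lambda>p. delta (x \<oplus> y) \<one> p - (\<lambda>p. delta x \<one> p + delta y \<one> p) p) \<in> Rel"
      by (rule tens_rels_cong) simp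
    then have "cls (delta (x \<oplus> y) \<one>) = cls (\<lambda>p. delta x \<one> p + delta y \<one> p)"
      using tens_class_eq_iff[OF fsums_delta fsums_add[OF fsums_delta fsums_delta]] xy by simp
    then show ?thesis by (rule sym)
  qed
  finally show "tens_incl R A (x \<oplus> y) = tens_incl R A x \<oplus>\<^bsub>T\<^esub> tens_incl R A y"
    unfolding tens_incl_def by simp
next
  show "tens_incl R A \<one> = \<one>\<^bsub>T\<^esub>" unfolding tens_incl_def tensor_one by simp
qed



lemma mult_sum_tens_rels: "f \<in> Rel \<Longrightarrow> mult_sum f = \<zero>"
proof (induction rule: tens_rels.induct)
  case zero
  show ?case by (rule mult_sum_zero)
next
  case (addl x x' y)
  then show ?case by (simp add: mult_sum_delta_diff3) algebra
next
  case (addr x y y')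
  then show ?case by (simp add: mult_sum_delta_diff3) algebra
next
  case (bal a x y)
  then have "a \<in> carrier R" using A_subset by auto
  with bal show ?case by (simp add: mult_sum_delta_diff) algebra
next
  case (diff f g)
  then show ?case using mult_sum_diff[OF tens_rels_fsums[OF diff(1)] tens_rels_fsums[OF diff(2)]] by simp
qed

text \<open>The representative chosen by \<open>SOME\<close> is irrelevant: \<open>mult_sum\<close> kills all relations.\<close>

definition mult_map :: "('a \<times> 'a \<Rightarrow> int) set \<Rightarrow> 'a" where
  "mult_map t = mult_sum (SOME f. f \<in> t)"

lemma mult_map_tens_class:
  assumes f: "f \<in> fsums R"
  shows "mult_map (cls f) = mult_sum f"
proof -
  have "\<exists>g. g \<in> cls f" using tens_class_self[OF f] by blast
  then have g: "(SOME g. g \<in> cls f) \<in> cls f" by (rule someI_ex)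
  define g where "g = (SOME g. g \<in> cls f)"
  have gs: "g \<in> fsums R" "(\<lambda>p. f p - g p) \<in> Rel" using g unfolding g_def tens_class_def by auto
  have "mult_sum f \<ominus> mult_sum g = \<zero>" using mult_sum_tens_rels[OF gs(2)] mult_sum_diff[OF f gs(1)] by simp
  moreover have "mult_sum f = (mult_sum f \<ominus> mult_sum g) \<oplus> mult_sum g"
    using mult_sum_closed[OF f] mult_sum_closed[OF gs(1)] by algebra
  ultimately have "mult_sum g = mult_sum f" using mult_sum_closed[OF gs(1)] by simp
  then show ?thesis unfolding mult_map_def g_def by simp
qed

lemma mult_map_ring_hom: "mult_map \<in> ring_hom T R"
proof (rule ring_hom_memI)
  fix x assume "x \<in> carrier T"
  then obtain f where f: "f \<in> fsums R" "x = cls f" by (metis tensor_carrier_cases)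
  then show "mult_map x \<in> carrier R" using mult_map_tens_class mult_sum_closed by simp
next
  fix x y assume "x \<in> carrier T" "y \<in> carrier T"
  then obtain f g where fg: "f \<in> fsums R" "x = cls f" "g \<in> fsums R" "y = cls g"
    by (metis tensor_carrier_cases)
  show "mult_map (x \<otimes>\<^bsub>T\<^esub> y) = mult_map x \<otimes> mult_map y"
    using fg tensor_mult mult_map_tens_class fsums_conv[OF fg(1,3)] mult_sum_conv[OF fg(1,3)] by simp
  have "mult_sum (\<lambda>p. f p + 1 * g p) = mult_sum f \<oplus> int_elem 1 \<otimes> mult_sum g" by (rule mult_sum_lincomb[OF fg(1,3)])
  then have "mult_sum (\<lambda>p. f p + g p) = mult_sum f \<oplus> mult_sum g" using mult_sum_closed[OF fg(3)] by (simp add: int_elem_1)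
  then show "mult_map (x \<oplus>\<^bsub>T\<^esub> y) = mult_map x \<oplus> mult_map y"
    using fg tensor_add mult_map_tens_class fsums_add[OF fg(1,3)] by simp
next
  show "mult_map \<one>\<^bsub>T\<^esub> = \<one>"
    unfolding tensor_one mult_map_tens_class[OF fsums_delta[OF one_closed one_closed]]
    using mult_sum_delta[OF one_closed one_closed] by simp
qed

lemma mult_map_tens_incl:
  assumes "b \<in> carrier R" shows "mult_map (tens_incl R A b) = b"
proof -
  have "mult_map (tens_incl R A b) = mult_sum (delta b \<one>)"
    unfolding tens_incl_def by (rule mult_map_tens_class[OF fsums_delta[OF assms one_closed]])
  also have "\<dots> = b" using assms by (simp add: mult_sum_delta)
  finally show ?thesis .
qed

lemma cring_retraction_tens_incl_mult_map: "cring_retraction R T (tens_incl R A) mult_map"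
  by (rule cring_retraction.intro[OF is_cring cring_tensor
        cring_retraction_axioms.intro[OF tens_incl_ring_hom mult_map_ring_hom mult_map_tens_incl]])

end

theorem corollary5p14:
  fixes B :: "('b,'m) ring_scheme" and A :: "'b set"
  assumes "cring B" and "subring A B"
  shows "Cmap B (tensor B A) (tens_incl B A) A
           \<in> iso (Cgrp B A) (Cgrp (tensor B A) (tens_incl B A ` A))"
proof -
  interpret tensor_square B A
    by (rule tensor_square.intro[OF assms(1)])
      (simp add: tensor_square_axioms_def subringE(1)[OF assms(2)])
  show ?thesis
    by (rule cring_retraction.Cmap_iso[OF cring_retraction_tens_incl_mult_map
          A_subset subringE(3)[OF assms(2)]])
qed

end
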